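(* Let $n>2$ and let $\psi(x)=(ax+b)(cx+d)^{-1}$ be a Möbius transformation of $\mathbb{R}^n\cup\{\infty\}$ mapping $\mathbb{R}^{n,+}$ onto itself, written in normalized Vahlen form. Let $U\subseteq\mathbb{R}^{n,+}$ be a domain and $\phi:U\to Cl_{n-1}$ a $C^2$ function. Then for every $v\in\psi^{-1}(U)$, $$\triangle_{\mathbb{R}^{n,+}}\big(\phi\circ\psi\big)(v)=\frac{1}{\|cv+d\|^4}\,\big(\triangle_{\mathbb{R}^{n,+}}\phi\big)(\psi(v))\quad\text{and}\quad \triangle'_{\mathbb{R}^{n,+}}\big(\phi\circ\psi\big)(v)=\frac{1}{\|cv+d\|^4}\,\big(\triangle'_{\mathbb{R}^{n,+}}\phi\big)(\psi(v)).$$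
   Context: $Cl_n$ is the real Clifford algebra generated by an orthonormal basis $e_1,\dots,e_n$ of $\mathbb{R}^n$ with $e_ie_j+e_je_i=-2\delta_{ij}$, $Cl_{n-1}$ the subalgebra generated by $e_1,\dots,e_{n-1}$; vectors $x=\sum x_je_j$ are viewed in $Cl_n$ and $\mathbb{R}^{n,+}=\{x:x_n>0\}$; $\|\cdot\|$ is the Euclidean norm of coefficients in $Cl_n$. With $\triangle$ the Euclidean Laplacian, $\triangle_{\mathbb{R}^{n,+}}=\triangle-\frac{n-2}{x_n}\frac{\partial}{\partial x_n}$ and $\triangle'_{\mathbb{R}^{n,+}}=\triangle-\frac{n-2}{x_n}\frac{\partial}{\partial x_n}+\frac{n-2}{x_n^2}$, applied componentwise. Normalized Vahlen form means $a,b,c,d\in Cl_n$ are each products of vectors of $\mathbb{R}^n$ (or zero), satisfying the Vahlen conditions ($\tilde ac,\tilde cd,\tilde db,\tilde ba\in\mathbb{R}^n$, where $\sim$ is reversion $\widetilde{e_{j_1}\cdots e_{j_r}}=e_{j_r}\cdots e_{j_1}$) and normalized so that the pseudo-determinant equals $\pm1$; equivalently, the Jacobian matrix of $\psi$ at $v$ equals $\|cv+d\|^{-2}$ times an orthogonal matrix. *)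

theory Defs
  imports "HOL-Analysis.Analysis"
begin

text \<open>Euclidean space R^n is real ^ 'n, with the index type 'n finite and linearly
ordered (e_1 < ... < e_n). The Clifford algebra Cl_n is modelled as the real vector
space with basis indexed by subsets of 'n (basis blade e_A = e_(a1)...e_(ak), a1<...<ak);
its norm is the Euclidean norm of the coefficients.\<close>

type_synonym 'n cl = "real ^ ('n set)"

definition last_idx :: "'n::{finite,linorder}" where
  "last_idx = Max (UNIV :: 'n set)"

text \<open>Sign of e_A e_B = sign * e_(A symdiff B), using e_i e_i = -1.\<close>
definition cl_sign :: "'n::{finite,linorder} set \<Rightarrow> 'n::{finite,linorder} set \<Rightarrow> real" where
  "cl_sign A B = (-1) ^ (card {(a, b). a \<in> A \<and> b \<in> B \<and> b < a} + card (A \<inter> B))"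

definition cl_mult :: "'n::{finite,linorder} cl \<Rightarrow> 'n::{finite,linorder} cl \<Rightarrow> 'n::{finite,linorder} cl" (infixl "\<otimes>\<^sub>c" 70) where
  "cl_mult u v = (\<chi> C. \<Sum>A\<in>UNIV. \<Sum>B\<in>UNIV.
      if (A - B) \<union> (B - A) = C then cl_sign A B * u $ A * v $ B else 0)"

definition cl_scalar :: "real \<Rightarrow> 'n::{finite,linorder} cl" where
  "cl_scalar r = (\<chi> A. if A = {} then r else 0)"

definition cl_one :: "'n::{finite,linorder} cl" where
  "cl_one = cl_scalar 1"

definition cl_vec :: "real ^ 'n::{finite,linorder} \<Rightarrow> 'n::{finite,linorder} cl" where
  "cl_vec x = (\<chi> A. if \<exists>i. A = {i} then x $ (THE i. A = {i}) else 0)"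

definition is_cl_vector :: "'n::{finite,linorder} cl \<Rightarrow> bool" where
  "is_cl_vector u \<longleftrightarrow> (\<exists>x. u = cl_vec x)"

definition cl_to_vec :: "real ^ ('n::{finite,linorder} set) \<Rightarrow> real ^ 'n::{finite,linorder}" where
  "cl_to_vec u = (\<chi> i. u $ {i})"

text \<open>Reversion: e_(j1)...e_(jr) reversed; on blades a sign (-1)^(r(r-1)/2).\<close>
definition cl_rev :: "'n::{finite,linorder} cl \<Rightarrow> 'n::{finite,linorder} cl" where
  "cl_rev u = (\<chi> A. (-1) ^ (card A * (card A - 1) div 2) * u $ A)"

definition cl_inv :: "'n::{finite,linorder} cl \<Rightarrow> 'n::{finite,linorder} cl" where
  "cl_inv u = (if \<exists>w. u \<otimes>\<^sub>c w = cl_one \<and> w \<otimes>\<^sub>c u = cl_one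
               then (THE w. u \<otimes>\<^sub>c w = cl_one \<and> w \<otimes>\<^sub>c u = cl_one) else 0)"

definition cl_invertible :: "'n::{finite,linorder} cl \<Rightarrow> bool" where
  "cl_invertible u \<longleftrightarrow> (\<exists>w. u \<otimes>\<^sub>c w = cl_one \<and> w \<otimes>\<^sub>c u = cl_one)"

definition prod_of_vectors :: "'n::{finite,linorder} cl \<Rightarrow> bool" where
  "prod_of_vectors u \<longleftrightarrow> u = 0 \<or> (\<exists>xs. u = foldr (\<lambda>x w. cl_vec x \<otimes>\<^sub>c w) xs cl_one)"

definition normalized_vahlen :: "'n::{finite,linorder} cl \<Rightarrow> 'n::{finite,linorder} cl \<Rightarrow> 'n::{finite,linorder} cl \<Rightarrow> 'n::{finite,linorder} cl \<Rightarrow> bool" where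
  "normalized_vahlen a b c d \<longleftrightarrow>
     prod_of_vectors a \<and> prod_of_vectors b \<and> prod_of_vectors c \<and> prod_of_vectors d \<and>
     is_cl_vector (cl_rev a \<otimes>\<^sub>c c) \<and> is_cl_vector (cl_rev c \<otimes>\<^sub>c d) \<and>
     is_cl_vector (cl_rev d \<otimes>\<^sub>c b) \<and> is_cl_vector (cl_rev b \<otimes>\<^sub>c a) \<and>
     (a \<otimes>\<^sub>c cl_rev d - b \<otimes>\<^sub>c cl_rev c = cl_scalar 1 \<or>
      a \<otimes>\<^sub>c cl_rev d - b \<otimes>\<^sub>c cl_rev c = cl_scalar (-1))"

definition moebius :: "'n::{finite,linorder} cl \<Rightarrow> 'n::{finite,linorder} cl \<Rightarrow> 'n::{finite,linorder} cl \<Rightarrow> 'n::{finite,linorder} cl \<Rightarrow> real ^ 'n::{finite,linorder} \<Rightarrow> 'n::{finite,linorder} cl" where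
  "moebius a b c d x = (a \<otimes>\<^sub>c cl_vec x + b) \<otimes>\<^sub>c cl_inv (c \<otimes>\<^sub>c cl_vec x + d)"

definition upper_half :: "(real ^ 'n::{finite,linorder}) set" where
  "upper_half = {x. x $ last_idx > 0}"

text \<open>psi maps the upper half space R^{n,+} onto itself (as a map of R^n \<union> {\<infinity>}):
  on R^{n,+} the denominator is invertible, the value is a vector, and the resulting
  map of vectors has image exactly R^{n,+}.\<close>
definition maps_upper_half_onto :: "'n::{finite,linorder} cl \<Rightarrow> 'n::{finite,linorder} cl \<Rightarrow> 'n::{finite,linorder} cl \<Rightarrow> 'n::{finite,linorder} cl \<Rightarrow> bool" where
  "maps_upper_half_onto a b c d \<longleftrightarrow>
     (\<forall>x\<in>upper_half. cl_invertible (c \<otimes>\<^sub>c cl_vec x + d) \<and> is_cl_vector (moebius a b c d x)) \<and>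
     (\<lambda>x. cl_to_vec (moebius a b c d x)) ` upper_half = upper_half"

text \<open>Cl_{n-1}: elements not involving e_n.\<close>
definition in_Cl_lower :: "'n::{finite,linorder} cl \<Rightarrow> bool" where
  "in_Cl_lower u \<longleftrightarrow> (\<forall>A. last_idx \<in> A \<longrightarrow> u $ A = 0)"

definition has_partial :: "'n::finite \<Rightarrow> (real ^ 'n \<Rightarrow> 'b::real_normed_vector) \<Rightarrow> real ^ 'n \<Rightarrow> 'b \<Rightarrow> bool" where
  "has_partial i f x D \<longleftrightarrow> ((\<lambda>t. f (x + t *\<^sub>R axis i 1)) has_vector_derivative D) (at 0)"

definition partial :: "'n::finite \<Rightarrow> (real ^ 'n \<Rightarrow> 'b::real_normed_vector) \<Rightarrow> real ^ 'n \<Rightarrow> 'b" where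
  "partial i f x = vector_derivative (\<lambda>t. f (x + t *\<^sub>R axis i 1)) (at 0)"

definition C2_on :: "(real ^ 'n::finite) set \<Rightarrow> (real ^ 'n \<Rightarrow> 'b::real_normed_vector) \<Rightarrow> bool" where
  "C2_on U f \<longleftrightarrow> continuous_on U f \<and>
     (\<forall>i. (\<forall>x\<in>U. has_partial i f x (partial i f x)) \<and> continuous_on U (partial i f)) \<and>
     (\<forall>i j. (\<forall>x\<in>U. has_partial j (partial i f) x (partial j (partial i f) x)) \<and>
            continuous_on U (partial j (partial i f)))"

definition laplacian :: "(real ^ 'n::finite \<Rightarrow> 'b::real_normed_vector) \<Rightarrow> real ^ 'n \<Rightarrow> 'b" where
  "laplacian f x = (\<Sum>i\<in>UNIV. partial i (partial i f) x)"

definition lap_H :: "(real ^ 'n::{finite,linorder} \<Rightarrow> 'b::real_normed_vector) \<Rightarrow> real ^ 'n::{finite,linorder} \<Rightarrow> 'b" where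
  "lap_H f x = laplacian f x
      - ((real CARD('n) - 2) / x $ last_idx) *\<^sub>R partial last_idx f x"

definition lap_H' :: "(real ^ 'n::{finite,linorder} \<Rightarrow> 'b::real_normed_vector) \<Rightarrow> real ^ 'n::{finite,linorder} \<Rightarrow> 'b" where
  "lap_H' f x = laplacian f x
      - ((real CARD('n) - 2) / x $ last_idx) *\<^sub>R partial last_idx f x
      + ((real CARD('n) - 2) / (x $ last_idx)^2) *\<^sub>R f x"

end

theory Submission
  imports Defs
begin

text \<open>
  Write \<open>c\<close> as a product of vectors. If \<open>c \<noteq> 0\<close>, the Vahlen conditions give \<open>d = c w\<close> for
  a vector \<open>w\<close>, and \<open>\<psi>(x) = p + \<mu> |x + w|\<^sup>-\<^sup>2 Q(x + w)\<close> with \<open>Q\<close> orthogonal and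
  \<open>\<parallel>c x + d\<parallel>\<^sup>2 = |x + w|\<^sup>2 / \<mu>\<close>; if \<open>c = 0\<close>, then \<open>\<psi>(x) = p + \<mu> Q x\<close> and
  \<open>\<parallel>d\<parallel>\<^sup>2 = 1 / \<mu>\<close>. Since \<open>\<psi>\<close> maps the upper half-space onto itself, \<open>p\<^sub>n = w\<^sub>n = 0\<close> and
  \<open>Q e\<^sub>n = e\<^sub>n\<close>, hence \<open>\<psi>\<^sub>n(v) = \<lambda> v\<^sub>n\<close> with \<open>\<lambda> = \<parallel>c v + d\<parallel>\<^sup>-\<^sup>2\<close>.

  The partial derivatives \<open>\<partial>\<^sub>i\<psi>(v)\<close> are pairwise orthogonal of length \<open>\<lambda>\<close>, so the chain rule gives
  \<open>\<Delta>(\<phi> \<circ> \<psi>) = \<lambda>\<^sup>2 (\<Delta>\<phi>) \<circ> \<psi> + \<Sum>\<^sub>k \<Delta>\<psi>\<^sub>k (\<partial>\<^sub>k\<phi>) \<circ> \<psi>\<close>. A direct computation shows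
  \<open>\<Delta>\<psi> - (n - 2) / v\<^sub>n \<partial>\<^sub>n\<psi> = -(n - 2) \<lambda>\<^sup>2 / \<psi>\<^sub>n e\<^sub>n\<close>, which is exactly what turns the
  first-order term of the upper half-space Laplacian at \<open>v\<close> into \<open>\<lambda>\<^sup>2\<close> times the one at \<open>\<psi>(v)\<close>; the zero-order
  term of \<open>\<Delta>'\<close> transforms the same way because \<open>\<psi>\<^sub>n(v) = \<lambda> v\<^sub>n\<close>.
\<close>

section \<open>Clifford multiplication\<close>

definition cl_blade :: "'n::{finite,linorder} set \<Rightarrow> 'n cl" where
  "cl_blade A = (\<chi> C. if C = A then 1 else 0)"

lemma cl_mult_component: "(u \<otimes>\<^sub>c v) $ C = (\<Sum>A\<in>UNIV. \<Sum>B\<in>UNIV.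
      if sym_diff A B = C then cl_sign A B * u $ A * v $ B else 0)"
  by (simp add: cl_mult_def)

lemma bounded_bilinear_cl_mult: "bounded_bilinear (cl_mult :: 'n::{finite,linorder} cl \<Rightarrow> 'n cl \<Rightarrow> 'n cl)"
proof
  fix a a' b b' :: "'n cl" and r :: real
  show "(a + a') \<otimes>\<^sub>c b = a \<otimes>\<^sub>c b + a' \<otimes>\<^sub>c b"
    by (simp add: vec_eq_iff cl_mult_component distrib_left distrib_right sum.distrib[symmetric] if_distrib cong: if_cong)
  show "a \<otimes>\<^sub>c (b + b') = a \<otimes>\<^sub>c b + a \<otimes>\<^sub>c b'"
    by (simp add: vec_eq_iff cl_mult_component distrib_left distrib_right sum.distrib[symmetric] if_distrib cong: if_cong)
  show "(r *\<^sub>R a) \<otimes>\<^sub>c b = r *\<^sub>R (a \<otimes>\<^sub>c b)"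
    by (simp add: vec_eq_iff cl_mult_component sum_distrib_left if_distrib mult.assoc mult.left_commute cong: if_cong)
  show "a \<otimes>\<^sub>c (r *\<^sub>R b) = r *\<^sub>R (a \<otimes>\<^sub>c b)"
    by (simp add: vec_eq_iff cl_mult_component sum_distrib_left if_distrib mult.assoc mult.left_commute cong: if_cong)
next
  define N where "N = real (CARD('n set))"
  show "\<exists>K. \<forall>a b :: 'n cl. norm (a \<otimes>\<^sub>c b) \<le> norm a * norm b * K"
  proof (intro exI allI)
    fix a b :: "'n cl"
    have comp: "\<bar>(a \<otimes>\<^sub>c b) $ C\<bar> \<le> norm a * norm b * (N * N)" for C
    proof -
      have "\<bar>(a \<otimes>\<^sub>c b) $ C\<bar> \<le> (\<Sum>A\<in>UNIV. \<Sum>B\<in>UNIV. \<bar>if sym_diff A B = C then cl_sign A B * a $ A * b $ B else 0\<bar>)"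
        unfolding cl_mult_component by (rule order_trans[OF sum_abs], rule sum_mono, rule sum_abs)
      also have "\<dots> \<le> (\<Sum>A\<in>(UNIV::'n set set). \<Sum>B\<in>(UNIV::'n set set). norm a * norm b)"
      proof (intro sum_mono)
        fix A B :: "'n set"
        have s: "\<bar>cl_sign A B\<bar> = 1" by (simp add: cl_sign_def power_abs)
        have "\<bar>cl_sign A B * a $ A * b $ B\<bar> = \<bar>a $ A\<bar> * \<bar>b $ B\<bar>" by (simp add: abs_mult s)
        also have "\<dots> \<le> norm a * norm b"
          by (intro mult_mono component_le_norm_cart) auto
        finally show "\<bar>if sym_diff A B = C then cl_sign A B * a $ A * b $ B else 0\<bar> \<le> norm a * norm b"
          by auto
      qed
      also have "\<dots> = norm a * norm b * (N * N)" by (simp add: N_def)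
      finally show ?thesis .
    qed
    have "norm (a \<otimes>\<^sub>c b) \<le> (\<Sum>C\<in>UNIV. \<bar>(a \<otimes>\<^sub>c b) $ C\<bar>)" by (rule norm_le_l1_cart)
    also have "\<dots> \<le> (\<Sum>C\<in>(UNIV::'n set set). norm a * norm b * (N * N))"
      by (intro sum_mono comp)
    also have "\<dots> = norm a * norm b * (N * N * N)" by (simp add: N_def)
    finally show "norm (a \<otimes>\<^sub>c b) \<le> norm a * norm b * (N * N * N)" .
  qed
qed

interpretation cl_mult: bounded_bilinear "cl_mult :: 'n::{finite,linorder} cl \<Rightarrow> 'n cl \<Rightarrow> 'n cl"
  by (rule bounded_bilinear_cl_mult)

definition inversions :: "'n::linorder set \<Rightarrow> 'n set \<Rightarrow> ('n \<times> 'n) set" where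
  "inversions A B = {(a, b). a \<in> A \<and> b \<in> B \<and> b < a}"

definition card_sign :: "'a set \<Rightarrow> real" where
  "card_sign X = (-1) ^ card X"

lemma card_sign_sym_diff:
  assumes "finite X" "finite Y"
  shows "card_sign (sym_diff X Y) = card_sign X * card_sign Y"
proof -
  have 1: "card X = card (X - Y) + card (X \<inter> Y)"
    using card_Int_Diff[OF assms(1), of Y] by simp
  have 2: "card Y = card (Y - X) + card (X \<inter> Y)"
    using card_Int_Diff[OF assms(2), of X] by (simp add: Int_commute)
  have 3: "card (sym_diff X Y) = card (X - Y) + card (Y - X)"
    using assms by (intro card_Un_disjoint) auto
  have "card_sign X * card_sign Y = (-1) ^ (card (sym_diff X Y) + 2 * card (X \<inter> Y))"
  proof -
    have "card X + card Y = card (sym_diff X Y) + 2 * card (X \<inter> Y)" using 1 2 3 by linarith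
    then show ?thesis unfolding card_sign_def power_add[symmetric] by simp
  qed
  also have "\<dots> = card_sign (sym_diff X Y)" by (simp add: card_sign_def power_add power_mult)
  finally show ?thesis by simp
qed

lemma card_sign_square[simp]: "card_sign X * card_sign X = 1"
  by (simp add: card_sign_def power_add[symmetric] power_even_eq[symmetric])

lemma cl_sign_eq_card_sign: "cl_sign A B = card_sign (inversions A B) * card_sign (A \<inter> B)"
  by (simp add: cl_sign_def card_sign_def inversions_def power_add)

lemma inversions_sym_diff_left: "inversions (sym_diff A B) E = sym_diff (inversions A E) (inversions B E)"
  by (auto simp: inversions_def)
lemma inversions_sym_diff_right: "inversions A (sym_diff B E) = sym_diff (inversions A B) (inversions A E)"
  by (auto simp: inversions_def)

lemma cl_sign_sym_diff_left:
  "cl_sign (sym_diff A B) (E::'n::{finite,linorder} set) = cl_sign A E * cl_sign B E"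
proof -
  have "sym_diff A B \<inter> E = sym_diff (A \<inter> E) (B \<inter> E)" by auto
  then show ?thesis
    unfolding cl_sign_eq_card_sign inversions_sym_diff_left by (simp add: card_sign_sym_diff)
qed

lemma cl_sign_sym_diff_right:
  "cl_sign (A::'n::{finite,linorder} set) (sym_diff B E) = cl_sign A B * cl_sign A E"
proof -
  have "A \<inter> sym_diff B E = sym_diff (A \<inter> B) (A \<inter> E)" by auto
  then show ?thesis
    unfolding cl_sign_eq_card_sign inversions_sym_diff_right by (simp add: card_sign_sym_diff)
qed

lemma cl_sign_square[simp]: "cl_sign A B * cl_sign A B = 1"
  by (simp add: cl_sign_def power_mult_distrib[symmetric])

lemma sym_diff_assoc: "sym_diff (sym_diff A B) E = sym_diff A (sym_diff B E)"
  by auto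

lemma cl_blade_component[simp]: "cl_blade A $ C = (if C = A then 1 else 0)"
  by (simp add: cl_blade_def)

lemma sum_sum_delta: "(\<Sum>a\<in>(UNIV::'a::finite set). \<Sum>b\<in>(UNIV::'b::finite set). if a = a0 then (if b = b0 then x else 0) else 0) = (x::real)"
proof -
  have "(\<Sum>b\<in>(UNIV::'b set). if a = a0 then (if b = b0 then x else 0) else 0) = (if a = a0 then x else 0)" for a
    by (cases "a = a0") simp_all
  then show ?thesis by simp
qed

lemma cl_blade_mult: "cl_blade A \<otimes>\<^sub>c cl_blade B = cl_sign A B *\<^sub>R cl_blade (sym_diff A B)"
proof -
  have pt: "(if sym_diff A' B' = C then cl_sign A' B' * cl_blade A $ A' * cl_blade B $ B' else 0)
     = (if A' = A then (if B' = B then (if sym_diff A B = C then cl_sign A B else 0) else 0) else 0)" for A' B' C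
    by simp
  have "(cl_blade A \<otimes>\<^sub>c cl_blade B) $ C = (if sym_diff A B = C then cl_sign A B else 0)" for C
    unfolding cl_mult_component pt by (cases "sym_diff A B = C") (simp_all add: sum_sum_delta)
  then show ?thesis by (simp add: vec_eq_iff)
qed

lemma cl_blade_expansion: "(u::'n::{finite,linorder} cl) = (\<Sum>A\<in>UNIV. (u $ A) *\<^sub>R cl_blade A)"
  by (simp add: vec_eq_iff sum_component if_distrib cong: if_cong)

lemma cl_mult_assoc: "(u \<otimes>\<^sub>c v) \<otimes>\<^sub>c w = u \<otimes>\<^sub>c (v \<otimes>\<^sub>c (w::'n::{finite,linorder} cl))"
proof -
  have b: "(cl_blade A \<otimes>\<^sub>c cl_blade B) \<otimes>\<^sub>c cl_blade E = cl_blade A \<otimes>\<^sub>c (cl_blade B \<otimes>\<^sub>c cl_blade (E::'n set))"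
    for A B E
    by (simp add: cl_blade_mult cl_mult.scaleR_left cl_mult.scaleR_right cl_sign_sym_diff_left cl_sign_sym_diff_right sym_diff_assoc)
  show ?thesis
    apply (subst (1 2) cl_blade_expansion[of u])
    apply (subst (1 2) cl_blade_expansion[of v])
    apply (subst (1 2) cl_blade_expansion[of w])
    apply (simp add: cl_mult.sum_left cl_mult.sum_right cl_mult.scaleR_left cl_mult.scaleR_right b)
    done
qed

lemma cl_sign_empty_left[simp]: "cl_sign {} B = 1" by (simp add: cl_sign_def)
lemma cl_sign_empty_right[simp]: "cl_sign A {} = 1" by (simp add: cl_sign_def)
lemma sym_diff_empty[simp]: "sym_diff {} B = B" "sym_diff A {} = A" "sym_diff A A = {}"
  by auto
lemma sym_diff_commute: "sym_diff A B = sym_diff B A" by auto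
lemma sym_diff_eq_empty_iff: "sym_diff A B = {} \<longleftrightarrow> A = B" by auto

lemma cl_one_eq_blade: "cl_one = cl_blade {}"
  by (simp add: vec_eq_iff cl_one_def cl_scalar_def)
lemma cl_scalar_eq_scaleR: "cl_scalar r = r *\<^sub>R cl_one"
  by (simp add: vec_eq_iff cl_one_def cl_scalar_def)

lemma cl_one_mult[simp]: "cl_one \<otimes>\<^sub>c u = (u::'n::{finite,linorder} cl)"
proof -
  have "cl_blade {} \<otimes>\<^sub>c cl_blade B = cl_blade (B::'n set)" for B by (simp add: cl_blade_mult)
  then show ?thesis unfolding cl_one_eq_blade
    by (subst (1 2) cl_blade_expansion[of u]) (simp add: cl_mult.sum_right cl_mult.scaleR_right)
qed

lemma cl_mult_one[simp]: "u \<otimes>\<^sub>c cl_one = (u::'n::{finite,linorder} cl)"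
proof -
  have "cl_blade B \<otimes>\<^sub>c cl_blade {} = cl_blade (B::'n set)" for B by (simp add: cl_blade_mult)
  then show ?thesis unfolding cl_one_eq_blade
    by (subst (1 2) cl_blade_expansion[of u]) (simp add: cl_mult.sum_left cl_mult.scaleR_left)
qed

lemma cl_one_nonzero[simp]: "cl_one \<noteq> (0::'n::{finite,linorder} cl)"
  by (simp add: vec_eq_iff cl_one_def cl_scalar_def)

lemma cl_vec_blade_expansion: "cl_vec x = (\<Sum>i\<in>UNIV. (x $ i) *\<^sub>R cl_blade {i})"
proof -
  have "(cl_vec x) $ A = (\<Sum>i\<in>UNIV. (x $ i) * (if A = {i} then 1 else 0))" for A
  proof (cases "\<exists>i. A = {i}")
    case True
    then obtain i where A: "A = {i}" by blast
    have "(\<Sum>j\<in>UNIV. (x $ j) * (if A = {j} then 1 else 0)) = (\<Sum>j\<in>UNIV. if j = i then x $ j else 0)"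
      by (intro sum.cong) (auto simp: A)
    then show ?thesis by (simp add: cl_vec_def A)
  next
    case False
    then show ?thesis by (simp add: cl_vec_def)
  qed
  then show ?thesis by (simp add: vec_eq_iff sum_component)
qed

lemma cl_vec_add: "cl_vec (x + y) = cl_vec x + cl_vec y"
  by (simp add: cl_vec_blade_expansion scaleR_add_left sum.distrib)
lemma cl_vec_scaleR: "cl_vec (r *\<^sub>R x) = r *\<^sub>R cl_vec x"
  by (simp add: cl_vec_blade_expansion scaleR_sum_right)
lemma cl_vec_zero[simp]: "cl_vec 0 = 0"
  by (simp add: cl_vec_blade_expansion)
lemma cl_vec_diff: "cl_vec (x - y) = cl_vec x - cl_vec y"
  by (simp add: cl_vec_blade_expansion scaleR_diff_left sum_subtractf)
lemma cl_to_vec_cl_vec[simp]: "cl_to_vec (cl_vec x) = x"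
  by (simp add: cl_to_vec_def cl_vec_def vec_eq_iff)

lemma cl_to_vec_add: "cl_to_vec (u + v) = cl_to_vec u + cl_to_vec v"
  by (simp add: cl_to_vec_def vec_eq_iff)
lemma cl_to_vec_scaleR: "cl_to_vec (r *\<^sub>R u) = r *\<^sub>R cl_to_vec u"
  by (simp add: cl_to_vec_def vec_eq_iff)

lemma cl_sign_singletons: "cl_sign {i} {j} = (if j < i then -1 else 1) * (if i = j then -1 else 1)"
proof -
  have "{(a, b). a \<in> {i} \<and> b \<in> {j} \<and> b < a} = (if j < i then {(i,j)} else {})" by auto
  then show ?thesis by (auto simp: cl_sign_def)
qed

lemma cl_vec_anticommute:
  fixes x y :: "real ^ 'n::{finite,linorder}"
  shows "cl_vec x \<otimes>\<^sub>c cl_vec y + cl_vec y \<otimes>\<^sub>c cl_vec x = (-2 * (x \<bullet> y)) *\<^sub>R cl_one"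
proof -
  have b: "cl_blade {i} \<otimes>\<^sub>c cl_blade {j} + cl_blade {j} \<otimes>\<^sub>c cl_blade {i}
      = (if i = j then -2 *\<^sub>R cl_one else 0)" for i j :: 'n
  proof (cases "i = j")
    case True then show ?thesis by (simp add: cl_blade_mult cl_sign_singletons cl_one_eq_blade) (simp add: vec_eq_iff)
  next
    case False
    have "sym_diff {i} {j} = sym_diff {j} {i}" by (rule sym_diff_commute)
    moreover have "cl_sign {i} {j} + cl_sign {j} {i} = 0"
      using False by (auto simp: cl_sign_singletons)
    ultimately show ?thesis using False
      by (simp add: cl_blade_mult scaleR_add_left[symmetric])
  qed
  have e1: "cl_vec x' \<otimes>\<^sub>c cl_vec y' = (\<Sum>i\<in>UNIV. \<Sum>j\<in>UNIV. (x' $ i * y' $ j) *\<^sub>R (cl_blade {i} \<otimes>\<^sub>c cl_blade {j}))"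
    for x' y' :: "real ^ 'n::{finite,linorder}"
    unfolding cl_vec_blade_expansion
    apply (simp only: cl_mult.sum_left)
    apply (simp only: cl_mult.scaleR_left cl_mult.sum_right cl_mult.scaleR_right scaleR_sum_right scaleR_scaleR)
    apply (simp add: mult.commute)
    done
  have e2: "cl_vec y \<otimes>\<^sub>c cl_vec x = (\<Sum>i\<in>UNIV. \<Sum>j\<in>UNIV. (x $ i * y $ j) *\<^sub>R (cl_blade {j} \<otimes>\<^sub>c cl_blade {i}))"
    unfolding e1 by (subst sum.swap) (simp add: mult.commute)
  have "cl_vec x \<otimes>\<^sub>c cl_vec y + cl_vec y \<otimes>\<^sub>c cl_vec x
      = (\<Sum>i\<in>UNIV. \<Sum>j\<in>UNIV. (x $ i * y $ j) *\<^sub>R (cl_blade {i} \<otimes>\<^sub>c cl_blade {j} + cl_blade {j} \<otimes>\<^sub>c cl_blade {i}))"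
    unfolding e2 e1[of x y] by (simp add: scaleR_add_right sum.distrib)
  also have "\<dots> = (\<Sum>i\<in>UNIV. (-2 * (x $ i * y $ i)) *\<^sub>R cl_one)"
    by (simp add: b if_distrib[where f="\<lambda>z. _ *\<^sub>R z"] mult.commute cong: if_cong)
  also have "\<dots> = (-2 * (x \<bullet> y)) *\<^sub>R cl_one"
    by (simp add: inner_vec_def scaleR_sum_left sum_distrib_left)
  finally show ?thesis .
qed

lemma cl_vec_square: "cl_vec x \<otimes>\<^sub>c cl_vec x = (- (x \<bullet> x)) *\<^sub>R cl_one"
proof -
  have "2 *\<^sub>R (cl_vec x \<otimes>\<^sub>c cl_vec x) = (-2 * (x \<bullet> x)) *\<^sub>R cl_one"
    using cl_vec_anticommute[of x x] by (simp only: scaleR_2)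
  then have "(1/2) *\<^sub>R (2 *\<^sub>R (cl_vec x \<otimes>\<^sub>c cl_vec x)) = (1/2) *\<^sub>R ((-2 * (x \<bullet> x)) *\<^sub>R cl_one)"
    by simp
  then show ?thesis by simp
qed

lemma cl_vec_sandwich:
  "cl_vec x \<otimes>\<^sub>c cl_vec z \<otimes>\<^sub>c cl_vec x = cl_vec ((x \<bullet> x) *\<^sub>R z - (2 * (z \<bullet> x)) *\<^sub>R x)"
proof -
  have h: "cl_vec x \<otimes>\<^sub>c cl_vec z + cl_vec z \<otimes>\<^sub>c cl_vec x = (-2 * (z \<bullet> x)) *\<^sub>R cl_one"
    using cl_vec_anticommute[of x z] by (simp add: inner_commute)
  have "cl_vec x \<otimes>\<^sub>c cl_vec z = (-2 * (z \<bullet> x)) *\<^sub>R cl_one - cl_vec z \<otimes>\<^sub>c cl_vec x"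
    using h by (metis add_diff_cancel_right')
  then have "cl_vec x \<otimes>\<^sub>c cl_vec z \<otimes>\<^sub>c cl_vec x
     = (-2 * (z \<bullet> x)) *\<^sub>R cl_vec x - (cl_vec z \<otimes>\<^sub>c (cl_vec x \<otimes>\<^sub>c cl_vec x))"
    by (simp add: cl_mult.diff_left cl_mult.scaleR_left cl_mult_assoc del: scaleR_minus_left)
  also have "\<dots> = cl_vec ((x \<bullet> x) *\<^sub>R z - (2 * (z \<bullet> x)) *\<^sub>R x)"
    by (simp add: cl_vec_square cl_mult.scaleR_right cl_mult.minus_right cl_vec_diff cl_vec_scaleR)
  finally show ?thesis .
qed

section \<open>Reversion and products of vectors\<close>

definition rev_sign :: "'a set \<Rightarrow> real" where
  "rev_sign A = (-1) ^ (card A * (card A - 1) div 2)"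

lemma card_inversions_self:
  fixes A :: "'n::{finite,linorder} set"
  shows "card (inversions A A) = card A * (card A - 1) div 2"
proof -
  define G where "G = {(a, b). a \<in> A \<and> b \<in> A \<and> a < b}"
  define D where "D = (\<lambda>a. (a, a)) ` A"
  have split: "A \<times> A = inversions A A \<union> G \<union> D"
    by (auto simp: inversions_def G_def D_def)
  have "card (A \<times> A) = card (inversions A A \<union> G) + card D"
    unfolding split by (rule card_Un_disjoint) (auto simp: inversions_def G_def D_def)
  also have "card (inversions A A \<union> G) = card (inversions A A) + card G"
    by (rule card_Un_disjoint) (auto simp: inversions_def G_def)
  also have "card G = card (inversions A A)"
  proof -
    have "G = prod.swap ` inversions A A" by (auto simp: inversions_def G_def image_iff)
    then show ?thesis by (simp add: card_image)
  qed
  also have "card D = card A" unfolding D_def by (rule card_image) (auto simp: inj_on_def)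
  finally have "card A * card A = 2 * card (inversions A A) + card A" by simp
  then have "card A * (card A - 1) = 2 * card (inversions A A)"
    by (simp add: diff_mult_distrib2)
  then show ?thesis by simp
qed

lemma rev_sign_eq_cl_sign: "rev_sign (A::'n::{finite,linorder} set) = cl_sign A A * card_sign A"
proof -
  have "cl_sign A A * card_sign A = (-1) ^ (card (inversions A A) + 2 * card A)"
    by (simp add: cl_sign_def inversions_def card_sign_def power_add mult_2)
  also have "\<dots> = (-1) ^ card (inversions A A)" by (simp add: power_add power_mult)
  finally show ?thesis by (simp add: rev_sign_def card_inversions_self)
qed

lemma cl_rev_component: "cl_rev u $ A = rev_sign A * u $ A"
  by (simp add: cl_rev_def rev_sign_def)

lemma cl_rev_blade: "cl_rev (cl_blade A) = rev_sign A *\<^sub>R cl_blade A"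
  by (simp add: vec_eq_iff cl_rev_component)
lemma cl_rev_scaleR: "cl_rev (r *\<^sub>R u) = r *\<^sub>R cl_rev u"
  by (simp add: vec_eq_iff cl_rev_component algebra_simps)
lemma cl_rev_zero[simp]: "cl_rev 0 = 0"
  by (simp add: vec_eq_iff cl_rev_component)
lemma cl_rev_sum: "cl_rev (sum f S) = (\<Sum>i\<in>S. cl_rev (f i))"
  by (simp add: vec_eq_iff cl_rev_component sum_component sum_distrib_left)

lemma rev_sign_square[simp]: "rev_sign A * rev_sign A = 1"
  by (simp add: rev_sign_def power_mult_distrib[symmetric])

lemma cl_rev_one[simp]: "cl_rev cl_one = cl_one"
  by (simp add: cl_one_eq_blade cl_rev_blade rev_sign_def)

lemma cl_rev_vec[simp]: "cl_rev (cl_vec x) = cl_vec x"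
  by (auto simp add: vec_eq_iff cl_rev_component cl_vec_def rev_sign_def)

lemma rev_sign_sym_diff:
  fixes A B :: "'n::{finite,linorder} set"
  shows "rev_sign (sym_diff A B) * cl_sign A B = rev_sign A * rev_sign B * cl_sign B A"
proof -
  have "rev_sign (sym_diff A B) = cl_sign A A * cl_sign A B * cl_sign B A * cl_sign B B * (card_sign A * card_sign B)"
    unfolding rev_sign_eq_cl_sign cl_sign_sym_diff_left cl_sign_sym_diff_right by (simp add: card_sign_sym_diff)
  then show ?thesis unfolding rev_sign_eq_cl_sign
    by (simp add: algebra_simps)
qed

lemma cl_rev_mult: "cl_rev (u \<otimes>\<^sub>c v) = cl_rev v \<otimes>\<^sub>c cl_rev (u::'n::{finite,linorder} cl)"
proof -
  have b: "cl_rev (cl_blade A \<otimes>\<^sub>c cl_blade B) = cl_rev (cl_blade B) \<otimes>\<^sub>c cl_rev (cl_blade (A::'n set))" for A B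
  proof -
    have "cl_rev (cl_blade A \<otimes>\<^sub>c cl_blade B) = (rev_sign (sym_diff A B) * cl_sign A B) *\<^sub>R cl_blade (sym_diff A B)"
      by (simp add: cl_blade_mult cl_rev_scaleR cl_rev_blade)
    also have "\<dots> = (rev_sign A * rev_sign B * cl_sign B A) *\<^sub>R cl_blade (sym_diff B A)"
      by (simp add: rev_sign_sym_diff sym_diff_commute)
    also have "\<dots> = cl_rev (cl_blade B) \<otimes>\<^sub>c cl_rev (cl_blade A)"
      by (simp add: cl_rev_blade cl_mult.scaleR_left cl_mult.scaleR_right cl_blade_mult)
    finally show ?thesis .
  qed
  show ?thesis
    apply (subst (1 2) cl_blade_expansion[of u])
    apply (subst (1 2) cl_blade_expansion[of v])
    apply (simp add: cl_mult.sum_left cl_mult.sum_right cl_mult.scaleR_left cl_mult.scaleR_right b cl_rev_sum cl_rev_scaleR scaleR_sum_right)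
    apply (subst sum.swap)
    apply (simp add: mult.commute)
    done
qed

lemma cl_mult_rev_scalar_part:
  "(u \<otimes>\<^sub>c cl_rev u) $ {} = (\<Sum>A\<in>UNIV. card_sign A * (u $ A)^2)" for u :: "'n::{finite,linorder} cl"
proof -
  have "(u \<otimes>\<^sub>c cl_rev u) $ {} = (\<Sum>A\<in>UNIV. \<Sum>B\<in>UNIV. if B = A then card_sign A * (u $ A)^2 else 0)"
    unfolding cl_mult_component
  proof (intro sum.cong refl)
    fix A B :: "'n set"
    have "cl_sign A A * rev_sign A = card_sign A"
      unfolding rev_sign_eq_cl_sign by (simp add: mult.assoc[symmetric])
    then show "(if sym_diff A B = {} then cl_sign A B * u $ A * cl_rev u $ B else 0) = (if B = A then card_sign A * (u $ A)^2 else 0)"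
      by (auto simp: sym_diff_eq_empty_iff cl_rev_component power2_eq_square algebra_simps)
  qed
  then show ?thesis by simp
qed

text \<open>A product of \<open>k\<close> vectors only involves blades of parity \<open>(-1)\<^sup>k\<close>, and for such elements the
  scalar part of \<open>u \<otimes>\<^sub>c cl_rev u\<close> is \<open>\<plusminus>\<parallel>u\<parallel>\<^sup>2\<close>; this is how the norm of a product of vectors is computed.\<close>

definition cl_homogeneous :: "real \<Rightarrow> 'n::{finite,linorder} cl \<Rightarrow> bool" where
  "cl_homogeneous e u \<longleftrightarrow> (\<forall>A. u $ A \<noteq> 0 \<longrightarrow> card_sign A = e)"

lemma cl_homogeneous_mult:
  assumes "cl_homogeneous e u" "cl_homogeneous f v"
  shows "cl_homogeneous (e * f) (u \<otimes>\<^sub>c v)"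
  unfolding cl_homogeneous_def
proof (intro allI impI)
  fix C assume "(u \<otimes>\<^sub>c v) $ C \<noteq> 0"
  then obtain A where "(\<Sum>B\<in>UNIV. if sym_diff A B = C then cl_sign A B * u $ A * v $ B else 0) \<noteq> 0"
    unfolding cl_mult_component by (meson sum.not_neutral_contains_not_neutral)
  then obtain B where "(if sym_diff A B = C then cl_sign A B * u $ A * v $ B else 0) \<noteq> 0"
    by (rule sum.not_neutral_contains_not_neutral)
  then have "sym_diff A B = C" "u $ A \<noteq> 0" "v $ B \<noteq> 0" by (auto split: if_splits)
  then show "card_sign C = e * f" using assms unfolding cl_homogeneous_def by (auto simp: card_sign_sym_diff)
qed

lemma cl_homogeneous_vec: "cl_homogeneous (-1) (cl_vec x)"
  by (auto simp: cl_homogeneous_def cl_vec_def card_sign_def split: if_splits)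

lemma cl_homogeneous_one: "cl_homogeneous 1 cl_one"
  by (auto simp: cl_homogeneous_def cl_one_eq_blade card_sign_def split: if_splits)

lemma cl_homogeneous_mult_rev_scalar_part:
  assumes "cl_homogeneous e u"
  shows "(u \<otimes>\<^sub>c cl_rev u) $ {} = e * (norm u)^2"
proof -
  have "(u \<otimes>\<^sub>c cl_rev u) $ {} = (\<Sum>A\<in>UNIV. e * (u $ A)^2)"
    unfolding cl_mult_rev_scalar_part
    by (intro sum.cong refl) (use assms in \<open>auto simp: cl_homogeneous_def\<close>)
  also have "\<dots> = e * (norm u)^2"
    by (simp only: power2_norm_eq_inner) (simp add: inner_vec_def sum_distrib_left power2_eq_square)
  finally show ?thesis .
qed

definition vec_prod :: "(real ^ 'n::{finite,linorder}) list \<Rightarrow> 'n cl" where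
  "vec_prod xs = foldr (\<lambda>x w. cl_vec x \<otimes>\<^sub>c w) xs cl_one"

definition vec_prod_scalar :: "(real ^ 'n::{finite,linorder}) list \<Rightarrow> real" where
  "vec_prod_scalar xs = prod_list (map (\<lambda>x. - (x \<bullet> x)) xs)"

lemma vec_prod_Nil[simp]: "vec_prod [] = cl_one" by (simp add: vec_prod_def)
lemma vec_prod_Cons[simp]: "vec_prod (x # xs) = cl_vec x \<otimes>\<^sub>c vec_prod xs" by (simp add: vec_prod_def)
lemma vec_prod_scalar_Nil[simp]: "vec_prod_scalar [] = 1" by (simp add: vec_prod_scalar_def)
lemma vec_prod_scalar_Cons[simp]: "vec_prod_scalar (x # xs) = - (x \<bullet> x) * vec_prod_scalar xs" by (simp add: vec_prod_scalar_def)

lemma cl_homogeneous_vec_prod: "cl_homogeneous ((-1) ^ length xs) (vec_prod xs)"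
proof (induction xs)
  case Nil then show ?case by (simp add: cl_homogeneous_one)
next
  case (Cons x xs)
  show ?case using cl_homogeneous_mult[OF cl_homogeneous_vec[of x] Cons.IH] by simp
qed

lemma vec_prod_mult_rev: "vec_prod xs \<otimes>\<^sub>c cl_rev (vec_prod xs) = vec_prod_scalar xs *\<^sub>R cl_one"
proof (induction xs)
  case Nil then show ?case by simp
next
  case (Cons x xs)
  have "vec_prod (x # xs) \<otimes>\<^sub>c cl_rev (vec_prod (x # xs))
      = cl_vec x \<otimes>\<^sub>c (vec_prod xs \<otimes>\<^sub>c cl_rev (vec_prod xs)) \<otimes>\<^sub>c cl_vec x"
    by (simp add: cl_rev_mult cl_mult_assoc)
  also have "\<dots> = vec_prod_scalar xs *\<^sub>R (cl_vec x \<otimes>\<^sub>c cl_vec x)"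
    by (simp add: Cons.IH cl_mult.scaleR_left cl_mult.scaleR_right)
  also have "\<dots> = vec_prod_scalar (x # xs) *\<^sub>R cl_one" by (simp add: cl_vec_square mult.commute)
  finally show ?case .
qed

lemma rev_mult_vec_prod: "cl_rev (vec_prod xs) \<otimes>\<^sub>c vec_prod xs = vec_prod_scalar xs *\<^sub>R cl_one"
proof (induction xs)
  case Nil then show ?case by simp
next
  case (Cons x xs)
  have "cl_rev (vec_prod (x # xs)) \<otimes>\<^sub>c vec_prod (x # xs)
      = cl_rev (vec_prod xs) \<otimes>\<^sub>c (cl_vec x \<otimes>\<^sub>c cl_vec x) \<otimes>\<^sub>c vec_prod xs"
    by (simp add: cl_rev_mult cl_mult_assoc)
  also have "\<dots> = (- (x \<bullet> x)) *\<^sub>R (cl_rev (vec_prod xs) \<otimes>\<^sub>c vec_prod xs)"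
    by (simp add: cl_vec_square cl_mult.scaleR_left cl_mult.scaleR_right cl_mult_assoc del: scaleR_minus_left)
  also have "\<dots> = vec_prod_scalar (x # xs) *\<^sub>R cl_one" by (simp add: Cons.IH)
  finally show ?case .
qed

lemma power2_norm_vec_prod: "(norm (vec_prod xs))^2 = \<bar>vec_prod_scalar xs\<bar>"
proof -
  have "vec_prod_scalar xs = (-1) ^ length xs * (norm (vec_prod xs))^2"
    using cl_homogeneous_mult_rev_scalar_part[OF cl_homogeneous_vec_prod[of xs]] by (simp add: vec_prod_mult_rev cl_one_eq_blade)
  then show ?thesis by (simp add: abs_mult power_abs)
qed

lemma vec_prod_scalar_eq_0_iff: "vec_prod_scalar xs = 0 \<longleftrightarrow> vec_prod xs = 0"
  using power2_norm_vec_prod[of xs] by auto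

fun vec_prod_action :: "(real ^ 'n::{finite,linorder}) list \<Rightarrow> real ^ 'n::{finite,linorder} \<Rightarrow> real ^ 'n::{finite,linorder}" where
  "vec_prod_action [] y = y"
| "vec_prod_action (x # xs) y = (x \<bullet> x) *\<^sub>R vec_prod_action xs y - (2 * (vec_prod_action xs y \<bullet> x)) *\<^sub>R x"

lemma vec_prod_sandwich: "vec_prod xs \<otimes>\<^sub>c cl_vec y \<otimes>\<^sub>c cl_rev (vec_prod xs) = cl_vec (vec_prod_action xs y)"
proof (induction xs)
  case Nil then show ?case by simp
next
  case (Cons x xs)
  have "vec_prod (x # xs) \<otimes>\<^sub>c cl_vec y \<otimes>\<^sub>c cl_rev (vec_prod (x # xs))
     = cl_vec x \<otimes>\<^sub>c (vec_prod xs \<otimes>\<^sub>c cl_vec y \<otimes>\<^sub>c cl_rev (vec_prod xs)) \<otimes>\<^sub>c cl_vec x"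
    by (simp add: cl_rev_mult cl_mult_assoc)
  also have "\<dots> = cl_vec (vec_prod_action (x # xs) y)"
    by (simp add: Cons.IH cl_vec_sandwich)
  finally show ?case .
qed

lemma norm_vec_prod_action: "norm (vec_prod_action xs y) = \<bar>vec_prod_scalar xs\<bar> * norm y"
proof (induction xs)
  case Nil then show ?case by simp
next
  case (Cons x xs)
  define z where "z = vec_prod_action xs y"
  define w where "w = (x \<bullet> x) *\<^sub>R z - (2 * (z \<bullet> x)) *\<^sub>R x"
  have "w \<bullet> w = (x \<bullet> x)^2 * (z \<bullet> z)"
    unfolding w_def by (simp add: inner_diff_left inner_diff_right inner_commute power2_eq_square algebra_simps)
  then have "norm w = sqrt ((x \<bullet> x)^2 * (z \<bullet> z))" by (simp add: norm_eq_sqrt_inner)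
  also have "\<dots> = (x \<bullet> x) * norm z" by (simp add: real_sqrt_mult norm_eq_sqrt_inner)
  finally have "norm w = (x \<bullet> x) * norm z" .
  then show ?case using Cons.IH by (simp add: z_def w_def abs_mult)
qed

lemma linear_vec_prod_action: "linear (vec_prod_action xs)"
proof (induction xs)
  case Nil then show ?case by (simp add: linear_id[unfolded id_def])
next
  case (Cons x xs)
  interpret l: linear "vec_prod_action xs" by (rule Cons.IH)
  show ?case
    by (rule linearI) (simp_all add: l.add l.scale inner_add_left scaleR_add_right scaleR_add_left distrib_left scaleR_diff_right mult.commute mult.left_commute)
qed

lemma prod_of_vectorsE:
  assumes "prod_of_vectors u"
  obtains xs where "u = vec_prod xs"
  using assms unfolding prod_of_vectors_def vec_prod_def[symmetric]
  by (metis vec_prod_Cons vec_prod_Nil cl_vec_zero cl_mult.zero_left)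

lemma cl_inv_eq:
  assumes "u \<otimes>\<^sub>c w = cl_one" "w \<otimes>\<^sub>c u = cl_one"
  shows "cl_inv u = w"
proof -
  have uniq: "w' = w" if "u \<otimes>\<^sub>c w' = cl_one" "w' \<otimes>\<^sub>c u = cl_one" for w'
  proof -
    have "w' = w' \<otimes>\<^sub>c (u \<otimes>\<^sub>c w)" using assms by simp
    also have "\<dots> = w" using that by (simp add: cl_mult_assoc[symmetric])
    finally show ?thesis .
  qed
  have ex: "\<exists>w. u \<otimes>\<^sub>c w = cl_one \<and> w \<otimes>\<^sub>c u = cl_one" using assms by blast
  have "(THE w'. u \<otimes>\<^sub>c w' = cl_one \<and> w' \<otimes>\<^sub>c u = cl_one) = w"
    by (rule the_equality) (use assms uniq in blast)+
  then show ?thesis using ex by (simp add: cl_inv_def)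
qed

lemma vec_prod_append: "vec_prod (xs @ ys) = vec_prod xs \<otimes>\<^sub>c vec_prod ys"
  by (induction xs) (simp_all add: cl_mult_assoc)

lemma vec_prod_scalar_append: "vec_prod_scalar (xs @ ys) = vec_prod_scalar xs * vec_prod_scalar ys"
  by (simp add: vec_prod_scalar_def)

section \<open>Normal forms of Moebius transformations in Vahlen form\<close>

lemma cl_inv_vec_prod:
  assumes "vec_prod_scalar xs \<noteq> 0"
  shows "cl_inv (vec_prod xs) = (1 / vec_prod_scalar xs) *\<^sub>R cl_rev (vec_prod xs)"
  by (rule cl_inv_eq)
    (use assms in \<open>simp_all add: cl_mult.scaleR_left cl_mult.scaleR_right vec_prod_mult_rev rev_mult_vec_prod\<close>)

lemma orthogonal_transformation_vec_prod_action:
  assumes "vec_prod_scalar xs \<noteq> 0" "\<bar>D\<bar> = 1"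
  shows "orthogonal_transformation (\<lambda>y. (D / \<bar>vec_prod_scalar xs\<bar>) *\<^sub>R vec_prod_action xs y)"
proof -
  interpret linear "vec_prod_action xs" by (rule linear_vec_prod_action)
  have "linear (\<lambda>y. (D / \<bar>vec_prod_scalar xs\<bar>) *\<^sub>R vec_prod_action xs y)"
    by (rule linearI) (simp_all add: add scale scaleR_add_right)
  moreover have "norm ((D / \<bar>vec_prod_scalar xs\<bar>) *\<^sub>R vec_prod_action xs y) = norm y" for y
    using assms by (simp add: norm_vec_prod_action)
  ultimately show ?thesis by (simp add: orthogonal_transformation)
qed

lemma normalized_vahlen_pseudo_det:
  assumes "normalized_vahlen a b c d"
  obtains D where "\<bar>D\<bar> = 1" "a \<otimes>\<^sub>c cl_rev d - b \<otimes>\<^sub>c cl_rev c = D *\<^sub>R cl_one"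
proof -
  have "a \<otimes>\<^sub>c cl_rev d - b \<otimes>\<^sub>c cl_rev c = 1 *\<^sub>R cl_one \<or> a \<otimes>\<^sub>c cl_rev d - b \<otimes>\<^sub>c cl_rev c = (- 1) *\<^sub>R cl_one"
    using assms unfolding normalized_vahlen_def cl_scalar_eq_scaleR by blast
  then show thesis by (metis that abs_1 abs_minus_cancel)
qed

text \<open>For \<open>c \<noteq> 0\<close> the Vahlen conditions let us write \<open>d = c w\<close>, so that
  \<open>(a x + b)(c x + d)\<^sup>-\<^sup>1 = (a (x + w) + (b - a w)) (c (x + w))\<^sup>-\<^sup>1\<close>, and the pseudo-determinant
  makes \<open>b - a w\<close> a multiple of \<open>c\<close>.\<close>

lemma normalized_vahlen_translation:
  fixes a b c d :: "'n::{finite,linorder} cl"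
  assumes vahlen: "normalized_vahlen a b c d"
    and c: "c = vec_prod cs" and s0: "vec_prod_scalar cs \<noteq> 0"
  obtains w D where "\<bar>D\<bar> = 1" "d = c \<otimes>\<^sub>c cl_vec w"
    "b - a \<otimes>\<^sub>c cl_vec w = (- D / vec_prod_scalar cs) *\<^sub>R c"
proof -
  define \<sigma> where "\<sigma> = vec_prod_scalar cs"
  obtain D where D: "\<bar>D\<bar> = 1" "a \<otimes>\<^sub>c cl_rev d - b \<otimes>\<^sub>c cl_rev c = D *\<^sub>R cl_one"
    using normalized_vahlen_pseudo_det[OF vahlen] by blast
  have crc: "c \<otimes>\<^sub>c cl_rev c = \<sigma> *\<^sub>R cl_one" by (simp add: c \<sigma>_def vec_prod_mult_rev)
  have rcc: "cl_rev c \<otimes>\<^sub>c c = \<sigma> *\<^sub>R cl_one" by (simp add: c \<sigma>_def rev_mult_vec_prod)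
  have "is_cl_vector (cl_rev c \<otimes>\<^sub>c d)" using vahlen by (simp add: normalized_vahlen_def)
  then obtain w0 where w0: "cl_rev c \<otimes>\<^sub>c d = cl_vec w0" unfolding is_cl_vector_def by blast
  define w where "w = (1 / \<sigma>) *\<^sub>R w0"
  have dcw: "d = c \<otimes>\<^sub>c cl_vec w"
  proof -
    have "c \<otimes>\<^sub>c cl_vec w = (1 / \<sigma>) *\<^sub>R (c \<otimes>\<^sub>c (cl_rev c \<otimes>\<^sub>c d))"
      by (simp add: w_def cl_vec_scaleR w0 cl_mult.scaleR_right)
    also have "\<dots> = d" using s0 by (simp add: cl_mult_assoc[symmetric] crc cl_mult.scaleR_left \<sigma>_def)
    finally show ?thesis by simp
  qed
  have "(b - a \<otimes>\<^sub>c cl_vec w) \<otimes>\<^sub>c cl_rev c = b \<otimes>\<^sub>c cl_rev c - a \<otimes>\<^sub>c cl_rev d"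
    by (simp add: cl_mult.diff_left dcw cl_rev_mult cl_mult_assoc)
  also have "\<dots> = (- D) *\<^sub>R cl_one" using D(2) by (simp add: algebra_simps)
  finally have e: "(b - a \<otimes>\<^sub>c cl_vec w) \<otimes>\<^sub>c cl_rev c = (- D) *\<^sub>R cl_one" .
  have "b - a \<otimes>\<^sub>c cl_vec w = (1 / \<sigma>) *\<^sub>R ((b - a \<otimes>\<^sub>c cl_vec w) \<otimes>\<^sub>c (cl_rev c \<otimes>\<^sub>c c))"
    using s0 by (simp add: rcc cl_mult.scaleR_right \<sigma>_def)
  also have "\<dots> = (- D / \<sigma>) *\<^sub>R c"
    by (simp add: cl_mult_assoc[symmetric] e cl_mult.scaleR_left cl_mult.minus_left)
  finally show thesis using that D(1) dcw by (simp add: \<sigma>_def)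
qed

lemma moebius_inversion_form:
  fixes a b c d :: "'n::{finite,linorder} cl"
  assumes vahlen: "normalized_vahlen a b c d" and c0: "c \<noteq> 0"
  obtains \<mu> Q w p where "\<mu> > 0" "orthogonal_transformation Q"
    "\<And>x. cl_invertible (c \<otimes>\<^sub>c cl_vec x + d) \<Longrightarrow> x + w \<noteq> 0"
    "\<And>x. x + w \<noteq> 0 \<Longrightarrow>
       cl_to_vec (moebius a b c d x) = p + (\<mu> / ((x + w) \<bullet> (x + w))) *\<^sub>R Q (x + w)"
    "\<And>x. (norm (c \<otimes>\<^sub>c cl_vec x + d))^2 = ((x + w) \<bullet> (x + w)) / \<mu>"
proof -
  have "prod_of_vectors c" using vahlen by (simp add: normalized_vahlen_def)
  then obtain cs where c: "c = vec_prod cs" by (rule prod_of_vectorsE)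
  define \<sigma> where "\<sigma> = vec_prod_scalar cs"
  have s0: "\<sigma> \<noteq> 0" using c0 by (simp add: c \<sigma>_def vec_prod_scalar_eq_0_iff)
  obtain w D where D: "\<bar>D\<bar> = 1" and d: "d = c \<otimes>\<^sub>c cl_vec w"
    and bw: "b - a \<otimes>\<^sub>c cl_vec w = (- D / \<sigma>) *\<^sub>R c"
    using normalized_vahlen_translation[OF vahlen c s0[unfolded \<sigma>_def]] unfolding \<sigma>_def by blast
  define \<mu> where "\<mu> = 1 / \<bar>\<sigma>\<bar>"
  define Q where "Q = (\<lambda>y. (D / \<bar>\<sigma>\<bar>) *\<^sub>R vec_prod_action cs y)"
  have den: "c \<otimes>\<^sub>c cl_vec x + d = vec_prod (cs @ [x + w])" for x
    by (simp add: c d vec_prod_append cl_vec_add cl_mult.add_right)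
  have den_inv: "cl_inv (c \<otimes>\<^sub>c cl_vec x + d)
      = (- 1 / (\<sigma> * ((x + w) \<bullet> (x + w)))) *\<^sub>R (cl_vec (x + w) \<otimes>\<^sub>c cl_rev c)" if "x + w \<noteq> 0" for x
    using that s0 unfolding den
    by (subst cl_inv_vec_prod) (simp_all add: vec_prod_scalar_append vec_prod_append cl_rev_mult c \<sigma>_def)
  have "cl_to_vec (moebius a b c d x) = cl_to_vec ((1 / \<sigma>) *\<^sub>R (a \<otimes>\<^sub>c cl_rev c))
      + (\<mu> / ((x + w) \<bullet> (x + w))) *\<^sub>R Q (x + w)" if y0: "x + w \<noteq> 0" for x
  proof -
    define y where "y = x + w"
    have yy: "y \<bullet> y \<noteq> 0" using y0 by (simp add: y_def)
    have num: "a \<otimes>\<^sub>c cl_vec x + b = a \<otimes>\<^sub>c cl_vec y + (- D / \<sigma>) *\<^sub>R c"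
      using bw by (simp add: y_def cl_vec_add cl_mult.add_right algebra_simps)
    have "moebius a b c d x = (- 1 / (\<sigma> * (y \<bullet> y))) *\<^sub>R (a \<otimes>\<^sub>c (cl_vec y \<otimes>\<^sub>c cl_vec y) \<otimes>\<^sub>c cl_rev c)
        + (D / (\<sigma> * (\<sigma> * (y \<bullet> y)))) *\<^sub>R (c \<otimes>\<^sub>c cl_vec y \<otimes>\<^sub>c cl_rev c)"
      unfolding moebius_def den_inv[OF y0] num y_def[symmetric]
      by (simp add: cl_mult.add_left cl_mult.diff_left cl_mult.minus_right cl_mult.scaleR_left
          cl_mult.scaleR_right cl_mult_assoc algebra_simps)
    also have "\<dots> = (1 / \<sigma>) *\<^sub>R (a \<otimes>\<^sub>c cl_rev c) + (\<mu> / (y \<bullet> y)) *\<^sub>R cl_vec (Q y)"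
      using yy s0 unfolding c vec_prod_sandwich
      by (simp add: cl_vec_square cl_mult.scaleR_left cl_mult.scaleR_right cl_vec_scaleR Q_def \<mu>_def
          abs_mult_self_eq del: scaleR_minus_left)
    finally show ?thesis by (simp add: cl_to_vec_add cl_to_vec_scaleR y_def)
  qed
  moreover have "(norm (c \<otimes>\<^sub>c cl_vec x + d))^2 = ((x + w) \<bullet> (x + w)) / \<mu>" for x
    unfolding den by (simp add: power2_norm_vec_prod vec_prod_scalar_append abs_mult \<mu>_def \<sigma>_def)
  moreover have "x + w \<noteq> 0" if "cl_invertible (c \<otimes>\<^sub>c cl_vec x + d)" for x
    using that unfolding den by (auto simp: cl_invertible_def vec_prod_append cl_mult.zero_left cl_mult.zero_right)
  moreover have "orthogonal_transformation Q"
    unfolding Q_def using orthogonal_transformation_vec_prod_action s0 D by (simp add: \<sigma>_def)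
  ultimately show thesis
    using that[of \<mu> Q w "cl_to_vec ((1 / \<sigma>) *\<^sub>R (a \<otimes>\<^sub>c cl_rev c))"] s0 by (simp add: \<mu>_def)
qed

lemma moebius_similarity_form:
  fixes a b c d :: "'n::{finite,linorder} cl"
  assumes vahlen: "normalized_vahlen a b c d" and c0: "c = 0"
  obtains \<mu> Q p where "\<mu> > 0" "orthogonal_transformation Q"
    "\<And>x. cl_to_vec (moebius a b c d x) = p + \<mu> *\<^sub>R Q x"
    "\<And>x. (norm (c \<otimes>\<^sub>c cl_vec x + d))^2 = 1 / \<mu>"
proof -
  obtain D where D: "\<bar>D\<bar> = 1" "a \<otimes>\<^sub>c cl_rev d - b \<otimes>\<^sub>c cl_rev c = D *\<^sub>R cl_one"
    using normalized_vahlen_pseudo_det[OF vahlen] by blast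
  have ad: "a \<otimes>\<^sub>c cl_rev d = D *\<^sub>R cl_one" using D(2) c0 by (simp add: cl_mult.zero_right)
  have "prod_of_vectors d" using vahlen by (simp add: normalized_vahlen_def)
  then obtain ds where ds: "d = vec_prod ds" by (rule prod_of_vectorsE)
  define \<delta> where "\<delta> = vec_prod_scalar ds"
  have d0: "\<delta> \<noteq> 0"
  proof
    assume "\<delta> = 0"
    then have "D *\<^sub>R cl_one = (0::'n cl)" using ad by (simp add: ds \<delta>_def vec_prod_scalar_eq_0_iff cl_mult.zero_right)
    then show False using D(1) by auto
  qed
  have "a = (1 / \<delta>) *\<^sub>R (a \<otimes>\<^sub>c (cl_rev d \<otimes>\<^sub>c d))"
    using d0 by (simp add: ds \<delta>_def rev_mult_vec_prod cl_mult.scaleR_right)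
  also have "\<dots> = (D / \<delta>) *\<^sub>R d"
    by (simp add: cl_mult_assoc[symmetric] ad cl_mult.scaleR_left)
  finally have a: "a = (D / \<delta>) *\<^sub>R d" .
  define \<mu> where "\<mu> = 1 / \<bar>\<delta>\<bar>"
  define Q where "Q = (\<lambda>y. (D / \<bar>\<delta>\<bar>) *\<^sub>R vec_prod_action ds y)"
  have "moebius a b c d x = (D / (\<delta> * \<delta>)) *\<^sub>R (d \<otimes>\<^sub>c cl_vec x \<otimes>\<^sub>c cl_rev d)
      + (1 / \<delta>) *\<^sub>R (b \<otimes>\<^sub>c cl_rev d)" for x
    unfolding moebius_def c0 cl_mult.zero_left add_0_left a ds cl_inv_vec_prod[OF d0[unfolded \<delta>_def]]
    by (simp add: cl_mult.add_left cl_mult.scaleR_left cl_mult.scaleR_right scaleR_add_right \<delta>_def)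
  then have "cl_to_vec (moebius a b c d x) = cl_to_vec ((1 / \<delta>) *\<^sub>R (b \<otimes>\<^sub>c cl_rev d)) + \<mu> *\<^sub>R Q x" for x
    unfolding ds vec_prod_sandwich
    by (simp add: cl_to_vec_add cl_to_vec_scaleR Q_def \<mu>_def abs_mult_self_eq)
  moreover have "(norm (c \<otimes>\<^sub>c cl_vec x + d))^2 = 1 / \<mu>" for x
    using d0 by (simp add: c0 ds power2_norm_vec_prod cl_mult.zero_left \<mu>_def \<delta>_def)
  moreover have "orthogonal_transformation Q"
    unfolding Q_def using orthogonal_transformation_vec_prod_action d0 D(1) by (simp add: \<delta>_def)
  ultimately show thesis
    using that[of \<mu> Q "cl_to_vec ((1 / \<delta>) *\<^sub>R (b \<otimes>\<^sub>c cl_rev d))"] d0 by (simp add: \<mu>_def)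
qed

section \<open>Moebius transformations of the upper half-space\<close>

abbreviation unit_vec :: "'n::finite \<Rightarrow> real ^ 'n" where "unit_vec i \<equiv> axis i 1"

lemma orthogonal_transformation_last_coord:
  fixes Q :: "real ^ 'n::finite \<Rightarrow> real ^ 'n"
  assumes Q: "orthogonal_transformation Q" and r: "Q r = unit_vec N"
  shows "(Q z) $ N = z \<bullet> r" "r \<bullet> r = 1"
proof -
  have "(Q z) $ N = Q z \<bullet> Q r" by (simp add: r cart_eq_inner_axis)
  also have "\<dots> = z \<bullet> r" using Q by (simp add: orthogonal_transformation_def)
  finally show "(Q z) $ N = z \<bullet> r" .
  have "r \<bullet> r = Q r \<bullet> Q r" using Q by (simp add: orthogonal_transformation_def)
  then show "r \<bullet> r = 1" by (simp add: r inner_axis_axis)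
qed

lemma unit_vec_eq_if_inner_nonneg:
  fixes r :: "real ^ 'n::finite"
  assumes r1: "r \<bullet> r = 1" and nonneg: "\<And>u. u $ N > 0 \<Longrightarrow> u \<bullet> r \<ge> 0"
  shows "r = unit_vec N"
proof (rule ccontr)
  assume re: "r \<noteq> unit_vec N"
  have rN: "\<bar>r $ N\<bar> \<le> 1" using component_le_norm_cart[of r N] r1 by (simp add: norm_eq_sqrt_inner)
  have "r $ N \<noteq> 1"
  proof
    assume h: "r $ N = 1"
    have "(r - unit_vec N) \<bullet> (r - unit_vec N) = r \<bullet> r - 2 * (r $ N) + 1"
      by (simp add: inner_diff_left inner_diff_right inner_axis inner_axis' inner_axis_axis inner_commute)
    then have "(r - unit_vec N) \<bullet> (r - unit_vec N) = 0" using h r1 by simp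
    then show False using re by simp
  qed
  then have rl: "r $ N < 1" using rN by auto
  define u where "u = (3 / 2 - r $ N / 2) *\<^sub>R unit_vec N - r"
  have "u $ N > 0" using rl by (simp add: u_def)
  moreover have "u \<bullet> r = (3 / 2 - r $ N / 2) * r $ N - 1"
    using r1 by (simp add: u_def inner_diff_left inner_axis')
  moreover have "(3 / 2 - r $ N / 2) * r $ N - 1 = (r $ N - 1) * (1 - r $ N / 2)"
    by (simp add: field_simps)
  moreover have "(r $ N - 1) * (1 - r $ N / 2) < 0" using rl rN by (intro mult_neg_pos) auto
  ultimately show False using nonneg by fastforce
qed

lemma upper_half_vertical_offset_eq_0:
  fixes f :: "real ^ 'n::{finite,linorder} \<Rightarrow> real ^ 'n::{finite,linorder}"
  assumes img: "f ` upper_half = upper_half"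
    and fN: "\<And>x. x \<in> upper_half \<Longrightarrow> f x $ last_idx = c + g x"
    and pos: "\<And>x. x \<in> upper_half \<Longrightarrow> g x > 0"
    and small: "\<And>\<epsilon>. \<epsilon> > 0 \<Longrightarrow> \<exists>x\<in>upper_half. g x < \<epsilon>"
  shows "c = 0"
proof -
  have "\<not> c < 0"
  proof
    assume "c < 0"
    then obtain x where x: "x \<in> upper_half" "g x < - c" using small[of "- c"] by auto
    have "f x \<in> upper_half" using img x(1) by blast
    then show False using fN[OF x(1)] x(2) by (simp add: upper_half_def)
  qed
  moreover have "\<not> c > 0"
  proof
    assume c: "c > 0"
    then have "(c / 2) *\<^sub>R unit_vec last_idx \<in> upper_half" by (simp add: upper_half_def)
    then obtain x where x: "x \<in> upper_half" "f x = (c / 2) *\<^sub>R unit_vec last_idx"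
      using img by (metis imageE)
    show False using fN[OF x(1)] x(2) pos[OF x(1)] c by simp
  qed
  ultimately show ?thesis by linarith
qed

lemma similarity_upper_half_normal:
  fixes Q :: "real ^ 'n::{finite,linorder} \<Rightarrow> real ^ 'n::{finite,linorder}"
  assumes mu: "\<mu> > 0" and Q: "orthogonal_transformation Q"
    and F: "\<And>x. x \<in> upper_half \<Longrightarrow> f x = p + \<mu> *\<^sub>R Q x"
    and img: "f ` upper_half = upper_half"
  shows "p $ last_idx = 0 \<and> Q (unit_vec last_idx) = unit_vec last_idx"
proof -
  define N where "N = (last_idx :: 'n)"
  have H: "x \<in> upper_half \<longleftrightarrow> x $ N > 0" for x by (simp add: upper_half_def N_def)
  obtain r where r: "Q r = unit_vec N" using orthogonal_transformation_surj[OF Q] by (metis surjD)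
  note oc = orthogonal_transformation_last_coord[OF Q r]
  have fN: "f x $ N = p $ N + \<mu> * (x \<bullet> r)" if "x \<in> upper_half" for x
    using F[OF that] oc by simp
  have "u \<bullet> r \<ge> 0" if u: "u $ N > 0" for u
  proof (rule ccontr)
    assume "\<not> u \<bullet> r \<ge> 0"
    define t where "t = (\<bar>p $ N\<bar> + 1) / (\<mu> * (- (u \<bullet> r)))"
    have t: "t > 0" unfolding t_def using mu \<open>\<not> u \<bullet> r \<ge> 0\<close> by (intro divide_pos_pos mult_pos_pos) auto
    have xH: "t *\<^sub>R u \<in> upper_half" using t u by (simp add: H)
    have "f (t *\<^sub>R u) $ N = p $ N - (\<bar>p $ N\<bar> + 1)"
      using fN[OF xH] mu \<open>\<not> u \<bullet> r \<ge> 0\<close> by (simp add: t_def)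
    moreover have "f (t *\<^sub>R u) $ N > 0" using img xH by (force simp: H)
    ultimately show False using abs_ge_self[of "p $ N"] by linarith
  qed
  then have re: "r = unit_vec N" by (rule unit_vec_eq_if_inner_nonneg[OF oc(2)])
  have "p $ N = 0"
  proof (rule upper_half_vertical_offset_eq_0[OF img, where g = "\<lambda>x. \<mu> * x $ N"])
    show "f x $ last_idx = p $ N + \<mu> * x $ N" if "x \<in> upper_half" for x
      using fN[OF that] re by (simp add: inner_axis N_def)
    show "\<exists>x\<in>upper_half. \<mu> * x $ N < \<epsilon>" if "\<epsilon> > 0" for \<epsilon>
      using that mu by (intro bexI[of _ "(\<epsilon> / (2 * \<mu>)) *\<^sub>R unit_vec N"]) (simp_all add: H)
  qed (use mu H in simp)
  then show ?thesis using r re by (simp add: N_def)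
qed

lemma inversion_upper_half_pole:
  fixes Q :: "real ^ 'n::{finite,linorder} \<Rightarrow> real ^ 'n::{finite,linorder}"
  assumes mu: "\<mu> > 0" and Q: "orthogonal_transformation Q"
    and F: "\<And>x. x \<in> upper_half \<Longrightarrow> x + w \<noteq> 0 \<and> f x = p + (\<mu> / ((x + w) \<bullet> (x + w))) *\<^sub>R Q (x + w)"
    and img: "f ` upper_half = upper_half"
  shows "w $ last_idx = 0"
proof -
  define N where "N = (last_idx :: 'n)"
  have H: "x \<in> upper_half \<longleftrightarrow> x $ N > 0" for x by (simp add: upper_half_def N_def)
  obtain r where r: "Q r = unit_vec N" using orthogonal_transformation_surj[OF Q] by (metis surjD)
  note oc = orthogonal_transformation_last_coord[OF Q r]
  have rN: "\<bar>r $ N\<bar> \<le> 1" using component_le_norm_cart[of r N] oc(2) by (simp add: norm_eq_sqrt_inner)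
  \<comment> \<open>For \<open>w $ N < 0\<close> the pole \<open>-w\<close> lies in the upper half-space, and points near it
    in direction \<open>-r\<close> are sent below its boundary.\<close>
  have "\<not> w $ N < 0"
  proof
    assume wn: "w $ N < 0"
    define s where "s = min (- w $ N / 2) (\<mu> / (\<bar>p $ N\<bar> + 1))"
    have s: "s > 0" using wn mu by (simp add: s_def)
    define x where "x = - w - s *\<^sub>R r"
    have "s * r $ N \<le> s" using rN s by (metis abs_le_D1 mult_left_le mult_le_cancel_left1 less_imp_le)
    then have "x $ N \<ge> - w $ N / 2" using s by (simp add: x_def s_def)
    then have xH: "x \<in> upper_half" using wn by (simp add: H)
    have y: "x + w = - (s *\<^sub>R r)" by (simp add: x_def)
    have "f x $ N = p $ N + (\<mu> / ((x + w) \<bullet> (x + w))) * ((x + w) \<bullet> r)"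
      using F[OF xH] oc by simp
    also have "(x + w) \<bullet> (x + w) = s^2" unfolding y using oc(2) by (simp add: power2_eq_square)
    also have "(x + w) \<bullet> r = - s" unfolding y using oc(2) by simp
    also have "p $ N + \<mu> / s^2 * (- s) = p $ N - \<mu> / s" using s by (simp add: power2_eq_square field_simps)
    also have "\<mu> / s \<ge> \<bar>p $ N\<bar> + 1"
    proof -
      have "s \<le> \<mu> / (\<bar>p $ N\<bar> + 1)" by (simp add: s_def)
      then have "s * (\<bar>p $ N\<bar> + 1) \<le> \<mu>" by (simp add: field_simps)
      then show ?thesis using s by (simp add: field_simps)
    qed
    then have "p $ N - \<mu> / s < 0" by linarith
    finally show False using img xH H by force
  qed
  \<comment> \<open>For \<open>w $ N > 0\<close> the image of the upper half-space is bounded.\<close>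
  moreover have "\<not> w $ N > 0"
  proof
    assume wn: "w $ N > 0"
    define z where "z = (norm p + \<mu> / w $ N + 1) *\<^sub>R unit_vec N"
    have pos: "norm p + \<mu> / w $ N + 1 > 0" using wn mu norm_ge_zero[of p] by (smt (verit) divide_pos_pos)
    have "z \<in> upper_half" using pos by (simp add: z_def H)
    then obtain x where x: "x \<in> upper_half" "f x = z" using img by (metis imageE)
    define y where "y = x + w"
    have ny: "norm y > w $ N" using x(1) component_le_norm_cart[of y N] by (simp add: y_def H)
    have y0: "y \<noteq> 0" using ny wn by auto
    have "norm (z - p) = \<mu> / (y \<bullet> y) * norm (Q y)" using F[OF x(1)] x(2) mu by (simp add: y_def)
    also have "\<dots> = \<mu> / norm y"
      using Q y0 mu by (simp add: orthogonal_transformation_norm power2_norm_eq_inner[symmetric] power2_eq_square)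
    also have "\<dots> < \<mu> / w $ N" using ny wn mu by (simp add: frac_less2)
    finally have "norm (z - p) < \<mu> / w $ N" .
    moreover have "norm z = norm p + \<mu> / w $ N + 1" using wn mu by (simp add: z_def)
    ultimately show False using norm_triangle_ineq2[of z p] by simp
  qed
  ultimately show ?thesis by (simp add: N_def)
qed

lemma inversion_upper_half_normal:
  fixes Q :: "real ^ 'n::{finite,linorder} \<Rightarrow> real ^ 'n::{finite,linorder}"
  assumes mu: "\<mu> > 0" and Q: "orthogonal_transformation Q"
    and F: "\<And>x. x \<in> upper_half \<Longrightarrow> x + w \<noteq> 0 \<and> f x = p + (\<mu> / ((x + w) \<bullet> (x + w))) *\<^sub>R Q (x + w)"
    and img: "f ` upper_half = upper_half"
  shows "w $ last_idx = 0 \<and> p $ last_idx = 0 \<and> Q (unit_vec last_idx) = unit_vec last_idx"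
proof -
  define N where "N = (last_idx :: 'n)"
  have H: "x \<in> upper_half \<longleftrightarrow> x $ N > 0" for x by (simp add: upper_half_def N_def)
  have w0: "w $ N = 0" using inversion_upper_half_pole[OF mu Q F img] by (simp add: N_def)
  obtain r where r: "Q r = unit_vec N" using orthogonal_transformation_surj[OF Q] by (metis surjD)
  note oc = orthogonal_transformation_last_coord[OF Q r]
  have fN: "f x $ N = p $ N + (\<mu> / ((x + w) \<bullet> (x + w))) * ((x + w) \<bullet> r)" if "x \<in> upper_half" for x
    using F[OF that] oc by simp
  have "u \<bullet> r \<ge> 0" if u: "u $ N > 0" for u
  proof (rule ccontr)
    assume neg: "\<not> u \<bullet> r \<ge> 0"
    have u0: "u \<bullet> u > 0" using u by (metis inner_gt_zero_iff less_irrefl zero_index)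
    define t where "t = \<mu> * (- (u \<bullet> r)) / ((u \<bullet> u) * (\<bar>p $ N\<bar> + 1))"
    have t: "t > 0" unfolding t_def using mu neg u0 by (intro divide_pos_pos mult_pos_pos) auto
    define x where "x = t *\<^sub>R u - w"
    have xH: "x \<in> upper_half" using t u w0 by (simp add: H x_def)
    have y: "x + w = t *\<^sub>R u" by (simp add: x_def)
    have "f x $ N = p $ N + \<mu> * (u \<bullet> r) / (t * (u \<bullet> u))"
      using fN[OF xH] t u0 unfolding y by (simp add: power2_eq_square field_simps)
    also have "\<mu> * (u \<bullet> r) / (t * (u \<bullet> u)) = - (\<bar>p $ N\<bar> + 1)"
      using t u0 mu neg by (simp add: t_def field_simps)
    finally have "f x $ N < 0" by simp
    then show False using img xH H by force
  qed
  then have re: "r = unit_vec N" by (rule unit_vec_eq_if_inner_nonneg[OF oc(2)])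
  have "p $ N = 0"
  proof (rule upper_half_vertical_offset_eq_0[OF img, where g = "\<lambda>x. \<mu> * x $ N / ((x + w) \<bullet> (x + w))"])
    show "f x $ last_idx = p $ N + \<mu> * x $ N / ((x + w) \<bullet> (x + w))" if "x \<in> upper_half" for x
      using fN[OF that] re w0 by (simp add: inner_axis N_def)
    show "\<mu> * x $ N / ((x + w) \<bullet> (x + w)) > 0" if "x \<in> upper_half" for x
      using F[OF that] that mu by (simp add: H)
    show "\<exists>x\<in>upper_half. \<mu> * x $ N / ((x + w) \<bullet> (x + w)) < \<epsilon>" if "\<epsilon> > 0" for \<epsilon>
    proof (intro bexI)
      define t where "t = 2 * \<mu> / \<epsilon>"
      have t: "t > 0" using that mu by (simp add: t_def)
      show "t *\<^sub>R unit_vec N - w \<in> upper_half" using t w0 by (simp add: H)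
      have "\<mu> * (t *\<^sub>R unit_vec N - w) $ N / ((t *\<^sub>R unit_vec N - w + w) \<bullet> (t *\<^sub>R unit_vec N - w + w)) = \<mu> / t"
        using t w0 by (simp add: inner_axis_axis power2_eq_square)
      also have "\<dots> < \<epsilon>" using that mu by (simp add: t_def)
      finally show "\<mu> * (t *\<^sub>R unit_vec N - w) $ N
          / ((t *\<^sub>R unit_vec N - w + w) \<bullet> (t *\<^sub>R unit_vec N - w + w)) < \<epsilon>" .
    qed
  qed
  then show ?thesis using r re w0 by (simp add: N_def)
qed

lemma moebius_upper_half_normal_form:
  fixes a b c d :: "'n::{finite,linorder} cl"
  assumes vahlen: "normalized_vahlen a b c d" and onto: "maps_upper_half_onto a b c d"
  obtains (similarity) p \<mu> Q where "\<mu> > 0" "orthogonal_transformation Q"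
      "p $ last_idx = 0" "Q (unit_vec last_idx) = unit_vec last_idx"
      "\<And>x. cl_to_vec (moebius a b c d x) = p + \<mu> *\<^sub>R Q x"
      "\<And>x. (norm (c \<otimes>\<^sub>c cl_vec x + d))^2 = 1 / \<mu>"
  | (inversion) p \<mu> Q w where "\<mu> > 0" "orthogonal_transformation Q"
      "p $ last_idx = 0" "Q (unit_vec last_idx) = unit_vec last_idx" "w $ last_idx = 0"
      "\<And>x. x \<in> upper_half \<Longrightarrow>
         cl_to_vec (moebius a b c d x) = p + (\<mu> / ((x + w) \<bullet> (x + w))) *\<^sub>R Q (x + w)"
      "\<And>x. (norm (c \<otimes>\<^sub>c cl_vec x + d))^2 = ((x + w) \<bullet> (x + w)) / \<mu>"
proof (cases "c = 0")
  case True
  obtain \<mu> Q p where mu: "\<mu> > 0" and Q: "orthogonal_transformation Q"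
    and form: "\<And>x. cl_to_vec (moebius a b c d x) = p + \<mu> *\<^sub>R Q x"
    and nrm: "\<And>x. (norm (c \<otimes>\<^sub>c cl_vec x + d))^2 = 1 / \<mu>"
    by (metis moebius_similarity_form[OF vahlen True])
  have "p $ last_idx = 0 \<and> Q (unit_vec last_idx) = unit_vec last_idx"
    by (rule similarity_upper_half_normal[OF mu Q form])
      (use onto in \<open>simp add: maps_upper_half_onto_def\<close>)
  then show thesis by (intro similarity[OF mu Q _ _ form nrm]) simp_all
next
  case False
  obtain \<mu> Q w p where mu: "\<mu> > 0" and Q: "orthogonal_transformation Q"
    and inv_w: "\<And>x. cl_invertible (c \<otimes>\<^sub>c cl_vec x + d) \<Longrightarrow> x + w \<noteq> 0"
    and form: "\<And>x. x + w \<noteq> 0 \<Longrightarrow>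
      cl_to_vec (moebius a b c d x) = p + (\<mu> / ((x + w) \<bullet> (x + w))) *\<^sub>R Q (x + w)"
    and nrm: "\<And>x. (norm (c \<otimes>\<^sub>c cl_vec x + d))^2 = ((x + w) \<bullet> (x + w)) / \<mu>"
    by (metis moebius_inversion_form[OF vahlen False])
  have nz: "x + w \<noteq> 0" if "x \<in> upper_half" for x
    by (rule inv_w) (use onto that in \<open>simp add: maps_upper_half_onto_def\<close>)
  have "w $ last_idx = 0 \<and> p $ last_idx = 0 \<and> Q (unit_vec last_idx) = unit_vec last_idx"
    by (rule inversion_upper_half_normal[OF mu Q, where f = "\<lambda>x. cl_to_vec (moebius a b c d x)"])
      (use form nz onto in \<open>simp_all add: maps_upper_half_onto_def\<close>)
  then show thesis by (intro inversion[OF mu Q _ _ _ form[OF nz] nrm]) simp_all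
qed

section \<open>Partial derivatives\<close>

lemma unit_vec_expansion: "(\<Sum>i\<in>UNIV. (x $ i) *\<^sub>R unit_vec i) = (x::real ^ 'n::finite)"
  using basis_expansion[of x] by (simp add: scalar_mult_eq_scaleR)

lemma has_vector_derivative_line_shift:
  assumes "((\<lambda>s. f (z + s *\<^sub>R unit_vec k)) has_vector_derivative D) (at 0)"
    and that: "z = z0 + t *\<^sub>R unit_vec k"
  shows "((\<lambda>s. f (z0 + s *\<^sub>R unit_vec k)) has_vector_derivative D) (at t)"
proof -
  have 1: "((\<lambda>s. s - t) has_vector_derivative 1) (at t)"
    by (auto intro!: derivative_eq_intros simp: has_vector_derivative_def)
  have 2: "((\<lambda>s. f (z + s *\<^sub>R unit_vec k)) has_vector_derivative D) (at ((\<lambda>s. s - t) t))"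
    using assms by simp
  have "((\<lambda>s. f (z + s *\<^sub>R unit_vec k)) \<circ> (\<lambda>s. s - t)) = (\<lambda>s. f (z0 + s *\<^sub>R unit_vec k))"
    using that by (auto simp: fun_eq_iff algebra_simps)
  with vector_diff_chain_at[OF 1 2] show ?thesis by simp
qed

lemma partials_linearization_bound:
  fixes g :: "real ^ 'n::finite \<Rightarrow> 'b::real_normed_vector"
  assumes hp: "\<And>z i. z \<in> ball x0 d \<Longrightarrow> ((\<lambda>t. g (z + t *\<^sub>R unit_vec i)) has_vector_derivative D i z) (at 0)"
    and close: "\<And>z i. z \<in> ball x0 d \<Longrightarrow> norm (D i z - D i x0) < e"
    and h: "norm h < d"
  shows "norm (g (x0 + h) - g x0 - (\<Sum>i\<in>UNIV. (h $ i) *\<^sub>R D i x0)) \<le> 3 * e * (\<Sum>i\<in>UNIV. \<bar>h $ i\<bar>)"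
proof -
  define hs where "hs S = (\<Sum>i\<in>S. (h $ i) *\<^sub>R unit_vec i)" for S
  have hs_comp: "hs S $ j = (if j \<in> S then h $ j else 0)" for S j
    by (simp add: hs_def sum_component axis_def if_distrib cong: if_cong)
  \<comment> \<open>Move from \<open>x0\<close> to \<open>x0 + h\<close> one coordinate at a time, applying the mean value bound on each segment.\<close>
  have "norm (g (x0 + hs S) - g x0 - (\<Sum>i\<in>S. (h $ i) *\<^sub>R D i x0)) \<le> 3 * e * (\<Sum>i\<in>S. \<bar>h $ i\<bar>)"
    for S :: "'n set"
  proof (induction S rule: finite_induct[OF finite])
    case 1 then show ?case by (simp add: hs_def)
  next
    case (2 k S)
    define z0 where "z0 = x0 + hs S"
    have hs_ins: "x0 + hs (insert k S) = z0 + (h $ k) *\<^sub>R unit_vec k"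
      using 2 by (simp add: hs_def z0_def algebra_simps)
    have inball: "z0 + t *\<^sub>R unit_vec k \<in> ball x0 d" if "t \<in> closed_segment 0 (h $ k)" for t
    proof -
      have tk: "\<bar>t\<bar> \<le> \<bar>h $ k\<bar>"
        using that by (cases "0 \<le> h $ k") (auto simp: closed_segment_eq_real_ivl)
      have "norm ((hs S + t *\<^sub>R unit_vec k) $ j) \<le> norm (h $ j)" for j
        using 2(2) tk by (cases "j = k") (simp_all add: hs_comp axis_def)
      then have "norm (hs S + t *\<^sub>R unit_vec k) \<le> norm h"
        by (rule norm_le_componentwise_cart)
      moreover have "dist x0 (z0 + t *\<^sub>R unit_vec k) = norm (hs S + t *\<^sub>R unit_vec k)"
        by (simp only: dist_norm norm_minus_commute[of x0]) (simp add: z0_def)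
      ultimately show ?thesis using h by simp
    qed
    have der: "((\<lambda>s. g (z0 + s *\<^sub>R unit_vec k)) has_vector_derivative D k (z0 + t *\<^sub>R unit_vec k))
        (at t within closed_segment 0 (h $ k))" if "t \<in> closed_segment 0 (h $ k)" for t
      using has_vector_derivative_line_shift[OF hp[OF inball[OF that]] refl]
      by (rule has_vector_derivative_at_within)
    have z0e: "norm (D k z0 - D k x0) < e"
      using close[OF inball[OF ends_in_segment(1)]] by simp
    have bnd: "norm (D k (z0 + t *\<^sub>R unit_vec k) - D k (z0 + 0 *\<^sub>R unit_vec k)) \<le> 2 * e"
      if "t \<in> closed_segment 0 (h $ k)" for t
      using close[OF inball[OF that], of k] z0e
        norm_triangle_ineq4[of "D k (z0 + t *\<^sub>R unit_vec k) - D k x0" "D k z0 - D k x0"]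
      by simp
    have "norm (g (z0 + (h $ k) *\<^sub>R unit_vec k) - g (z0 + 0 *\<^sub>R unit_vec k)
        - (h $ k - 0) *\<^sub>R D k (z0 + 0 *\<^sub>R unit_vec k)) \<le> norm (h $ k - 0) * (2 * e)"
      by (rule vector_differentiable_bound_linearization[OF der order_refl bnd ends_in_segment(1)])
    then have A: "norm (g (z0 + (h $ k) *\<^sub>R unit_vec k) - g z0 - (h $ k) *\<^sub>R D k z0) \<le> \<bar>h $ k\<bar> * (2 * e)"
      by simp
    have B: "norm ((h $ k) *\<^sub>R (D k z0 - D k x0)) \<le> \<bar>h $ k\<bar> * e"
      using z0e by (simp add: mult_left_mono)
    have "norm (g (x0 + hs (insert k S)) - g x0 - (\<Sum>i\<in>insert k S. (h $ i) *\<^sub>R D i x0))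
       = norm ((g (z0 + (h $ k) *\<^sub>R unit_vec k) - g z0 - (h $ k) *\<^sub>R D k z0)
           + (h $ k) *\<^sub>R (D k z0 - D k x0) + (g (x0 + hs S) - g x0 - (\<Sum>i\<in>S. (h $ i) *\<^sub>R D i x0)))"
      using 2 by (simp add: hs_ins z0_def algebra_simps)
    also have "\<dots> \<le> \<bar>h $ k\<bar> * (2 * e) + \<bar>h $ k\<bar> * e + 3 * e * (\<Sum>i\<in>S. \<bar>h $ i\<bar>)"
      using A B 2(3) by (smt (verit) norm_triangle_ineq)
    also have "\<dots> = 3 * e * (\<Sum>i\<in>insert k S. \<bar>h $ i\<bar>)"
      using 2 by (simp add: algebra_simps)
    finally show ?case .
  qed
  moreover have "hs UNIV = h" unfolding hs_def by (rule unit_vec_expansion)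
  ultimately show ?thesis by (metis (no_types))
qed

lemma has_derivative_continuous_partials:
  fixes g :: "real ^ 'n::finite \<Rightarrow> 'b::real_normed_vector"
  assumes U: "open U" "x0 \<in> U"
    and hp: "\<And>x i. x \<in> U \<Longrightarrow> ((\<lambda>t. g (x + t *\<^sub>R unit_vec i)) has_vector_derivative D i x) (at 0)"
    and cont: "\<And>i. continuous_on U (D i)"
  shows "(g has_derivative (\<lambda>h. \<Sum>i\<in>UNIV. (h $ i) *\<^sub>R D i x0)) (at x0)"
  unfolding has_derivative_at_alt
proof (intro conjI allI impI)
  show "bounded_linear (\<lambda>h. \<Sum>i\<in>UNIV. (h $ i) *\<^sub>R D i x0)"
    by (intro bounded_linear_sum bounded_linear_compose[OF bounded_linear_scaleR_left bounded_linear_vec_nth])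
next
  fix e :: real assume e: "e > 0"
  define e' where "e' = e / (3 * real CARD('n))"
  have e': "e' > 0" using e by (simp add: e'_def)
  have "\<forall>\<^sub>F z in nhds x0. dist (D i z) (D i x0) < e'" for i
    using cont U e' by (metis continuous_on_eq_continuous_at continuous_at tendstoD tendsto_at_iff_tendsto_nhds)
  then have "\<forall>\<^sub>F z in nhds x0. \<forall>i. dist (D i z) (D i x0) < e'"
    by (rule eventually_all_finite)
  moreover have "\<forall>\<^sub>F z in nhds x0. z \<in> U" using U by (rule eventually_nhds_in_open)
  ultimately have "\<forall>\<^sub>F z in nhds x0. z \<in> U \<and> (\<forall>i. dist (D i z) (D i x0) < e')"
    by eventually_elim auto
  then obtain d where d: "d > 0" "\<And>z. dist z x0 < d \<Longrightarrow> z \<in> U \<and> (\<forall>i. dist (D i z) (D i x0) < e')"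
    unfolding eventually_nhds_metric by blast
  show "\<exists>d>0. \<forall>y. norm (y - x0) < d \<longrightarrow>
        norm (g y - g x0 - (\<Sum>i\<in>UNIV. ((y - x0) $ i) *\<^sub>R D i x0)) \<le> e * norm (y - x0)"
  proof (intro exI[of _ d] conjI allI impI)
    fix y assume y: "norm (y - x0) < d"
    have "norm (g (x0 + (y - x0)) - g x0 - (\<Sum>i\<in>UNIV. ((y - x0) $ i) *\<^sub>R D i x0))
        \<le> 3 * e' * (\<Sum>i\<in>UNIV. \<bar>(y - x0) $ i\<bar>)"
      by (rule partials_linearization_bound) (use hp d y in \<open>auto simp: dist_commute dist_norm\<close>)
    then have "norm (g y - g x0 - (\<Sum>i\<in>UNIV. ((y - x0) $ i) *\<^sub>R D i x0))
        \<le> 3 * e' * (\<Sum>i\<in>UNIV. \<bar>(y - x0) $ i\<bar>)"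
      by simp
    also have "\<dots> \<le> 3 * e' * (\<Sum>i\<in>(UNIV::'n set). norm (y - x0))"
      using e' by (intro mult_left_mono sum_mono component_le_norm_cart) auto
    also have "\<dots> = e * norm (y - x0)" by (simp add: e'_def)
    finally show "norm (g y - g x0 - (\<Sum>i\<in>UNIV. ((y - x0) $ i) *\<^sub>R D i x0)) \<le> e * norm (y - x0)" .
  qed (rule d(1))
qed

lemma has_vector_derivative_line_chain:
  assumes "(g has_derivative G) (at (F x))"
    and "((\<lambda>t. F (x + t *\<^sub>R unit_vec i)) has_vector_derivative v) (at 0)"
  shows "((\<lambda>t. g (F (x + t *\<^sub>R unit_vec i))) has_vector_derivative G v) (at 0)"
proof -
  have "(g has_derivative G) (at ((\<lambda>t. F (x + t *\<^sub>R unit_vec i)) 0) within (\<lambda>t. F (x + t *\<^sub>R unit_vec i)) ` UNIV)"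
    using assms(1) by (simp add: has_derivative_at_withinI)
  from vector_derivative_diff_chain_within[OF assms(2) this]
  show ?thesis by (simp add: o_def)
qed

lemma has_field_derivative_component:
  assumes "(f has_vector_derivative f') (at t)"
  shows "((\<lambda>s. f s $ k) has_field_derivative (f' $ k)) (at t)"
proof -
  have "((\<lambda>s. f s $ k) has_derivative (\<lambda>x. (x *\<^sub>R f') $ k)) (at t)"
    using bounded_linear.has_derivative[OF bounded_linear_vec_nth assms[unfolded has_vector_derivative_def]] .
  moreover have "(\<lambda>x. (x *\<^sub>R f') $ k) = (*) (f' $ k)" by (auto simp: fun_eq_iff)
  ultimately show ?thesis by (simp add: has_field_derivative_def)
qed

lemma C2_on_has_derivative:
  fixes \<phi> :: "real ^ 'n::finite \<Rightarrow> 'b::real_normed_vector"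
  assumes U: "open U" and C2: "C2_on U \<phi>" and y: "y \<in> U"
  shows "(\<phi> has_derivative (\<lambda>h. \<Sum>k\<in>UNIV. (h $ k) *\<^sub>R partial k \<phi> y)) (at y)"
    and "(partial k \<phi> has_derivative (\<lambda>h. \<Sum>l\<in>UNIV. (h $ l) *\<^sub>R partial l (partial k \<phi>) y)) (at y)"
proof -
  show "(\<phi> has_derivative (\<lambda>h. \<Sum>k\<in>UNIV. (h $ k) *\<^sub>R partial k \<phi> y)) (at y)"
    by (rule has_derivative_continuous_partials[OF U y]) (use C2 in \<open>auto simp: C2_on_def has_partial_def\<close>)
  show "(partial k \<phi> has_derivative (\<lambda>h. \<Sum>l\<in>UNIV. (h $ l) *\<^sub>R partial l (partial k \<phi>) y)) (at y)"
    by (rule has_derivative_continuous_partials[OF U y]) (use C2 in \<open>auto simp: C2_on_def has_partial_def\<close>)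
qed

lemma partial_comp_has_vector_derivative:
  fixes \<phi> :: "real ^ 'n::finite \<Rightarrow> 'b::real_normed_vector" and F :: "real ^ 'n \<Rightarrow> real ^ 'n"
  assumes U: "open U" and C2: "C2_on U \<phi>" and FU: "F x \<in> U"
    and dF: "((\<lambda>t. F (x + t *\<^sub>R unit_vec i)) has_vector_derivative dF) (at 0)"
  shows "((\<lambda>t. (\<phi> \<circ> F) (x + t *\<^sub>R unit_vec i)) has_vector_derivative (\<Sum>k\<in>UNIV. (dF $ k) *\<^sub>R partial k \<phi> (F x))) (at 0)"
  using has_vector_derivative_line_chain[OF C2_on_has_derivative(1)[OF U C2 FU] dF] by (simp add: o_def)

lemma partial_comp:
  fixes \<phi> :: "real ^ 'n::finite \<Rightarrow> 'b::real_normed_vector" and F :: "real ^ 'n \<Rightarrow> real ^ 'n"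
  assumes U: "open U" and C2: "C2_on U \<phi>"
    and V: "open V" "v \<in> V" "\<And>x. x \<in> V \<Longrightarrow> F x \<in> U"
    and dF: "\<And>x i. x \<in> V \<Longrightarrow> ((\<lambda>t. F (x + t *\<^sub>R unit_vec i)) has_vector_derivative dF i x) (at 0)"
    and d2F: "\<And>i. ((\<lambda>t. dF i (v + t *\<^sub>R unit_vec i)) has_vector_derivative d2F i) (at 0)"
  shows "partial i (\<phi> \<circ> F) v = (\<Sum>k\<in>UNIV. (dF i v $ k) *\<^sub>R partial k \<phi> (F v))"
    and "partial i (partial i (\<phi> \<circ> F)) v = (\<Sum>k\<in>UNIV. (d2F i $ k) *\<^sub>R partial k \<phi> (F v))
          + (\<Sum>k\<in>UNIV. (dF i v $ k) *\<^sub>R (\<Sum>l\<in>UNIV. (dF i v $ l) *\<^sub>R partial l (partial k \<phi>) (F v)))"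
proof -
  have P1: "partial i (\<phi> \<circ> F) x = (\<Sum>k\<in>UNIV. (dF i x $ k) *\<^sub>R partial k \<phi> (F x))" if "x \<in> V" for x
    unfolding partial_def[of i "\<phi> \<circ> F"] by (rule vector_derivative_at[OF partial_comp_has_vector_derivative[OF U C2 V(3)[OF that] dF[OF that]]])
  then show "partial i (\<phi> \<circ> F) v = (\<Sum>k\<in>UNIV. (dF i v $ k) *\<^sub>R partial k \<phi> (F v))" using V(2) .
  define T where "T = {t::real. v + t *\<^sub>R unit_vec i \<in> V}"
  have T: "open T" "0 \<in> T"
  proof -
    have "open ((\<lambda>t::real. v + t *\<^sub>R unit_vec i) -` V)" by (rule open_vimage[OF V(1)]) (intro continuous_intros)
    then show "open T" by (simp add: T_def vimage_def)
    show "0 \<in> T" using V(2) by (simp add: T_def)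
  qed
  have F0: "F (v + 0 *\<^sub>R unit_vec i) = F v" by simp
  have dk: "((\<lambda>t. dF i (v + t *\<^sub>R unit_vec i) $ k) has_field_derivative (d2F i $ k)) (at 0)" for k
    by (rule has_field_derivative_component[OF d2F])
  have pk: "((\<lambda>t. partial k \<phi> (F (v + t *\<^sub>R unit_vec i))) has_vector_derivative
      (\<Sum>l\<in>UNIV. (dF i v $ l) *\<^sub>R partial l (partial k \<phi>) (F v))) (at 0)" for k
    using has_vector_derivative_line_chain[OF C2_on_has_derivative(2)[OF U C2 V(3)[OF V(2)]] dF[OF V(2)]] by simp
  have "((\<lambda>t. \<Sum>k\<in>UNIV. (dF i (v + t *\<^sub>R unit_vec i) $ k) *\<^sub>R partial k \<phi> (F (v + t *\<^sub>R unit_vec i))) has_vector_derivative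
      (\<Sum>k\<in>UNIV. (dF i (v + 0 *\<^sub>R unit_vec i) $ k) *\<^sub>R (\<Sum>l\<in>UNIV. (dF i v $ l) *\<^sub>R partial l (partial k \<phi>) (F v))
          + (d2F i $ k) *\<^sub>R partial k \<phi> (F (v + 0 *\<^sub>R unit_vec i)))) (at 0)"
    by (intro has_vector_derivative_sum has_vector_derivative_scaleR dk pk)
  then have "((\<lambda>t. \<Sum>k\<in>UNIV. (dF i (v + t *\<^sub>R unit_vec i) $ k) *\<^sub>R partial k \<phi> (F (v + t *\<^sub>R unit_vec i))) has_vector_derivative
      (\<Sum>k\<in>UNIV. (d2F i $ k) *\<^sub>R partial k \<phi> (F v))
          + (\<Sum>k\<in>UNIV. (dF i v $ k) *\<^sub>R (\<Sum>l\<in>UNIV. (dF i v $ l) *\<^sub>R partial l (partial k \<phi>) (F v)))) (at 0)"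
    by (simp add: sum.distrib add.commute)
  then have "((\<lambda>t. partial i (\<phi> \<circ> F) (v + t *\<^sub>R unit_vec i)) has_vector_derivative
      (\<Sum>k\<in>UNIV. (d2F i $ k) *\<^sub>R partial k \<phi> (F v))
          + (\<Sum>k\<in>UNIV. (dF i v $ k) *\<^sub>R (\<Sum>l\<in>UNIV. (dF i v $ l) *\<^sub>R partial l (partial k \<phi>) (F v)))) (at 0)"
    by (rule has_vector_derivative_transform_within_open[OF _ T]) (simp add: T_def P1)
  then show "partial i (partial i (\<phi> \<circ> F)) v = (\<Sum>k\<in>UNIV. (d2F i $ k) *\<^sub>R partial k \<phi> (F v))
          + (\<Sum>k\<in>UNIV. (dF i v $ k) *\<^sub>R (\<Sum>l\<in>UNIV. (dF i v $ l) *\<^sub>R partial l (partial k \<phi>) (F v)))"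
    unfolding partial_def[of i "partial i (\<phi> \<circ> F)"] by (rule vector_derivative_at)
qed

lemma partial_cong_open:
  assumes S: "open S" "x \<in> S" and eq: "\<And>y. y \<in> S \<Longrightarrow> f y = g y"
  shows "partial i f x = partial i g x"
proof -
  define T where "T = {t::real. x + t *\<^sub>R unit_vec i \<in> S}"
  have T: "open T" "0 \<in> T"
  proof -
    have "open ((\<lambda>t::real. x + t *\<^sub>R unit_vec i) -` S)" by (rule open_vimage[OF S(1)]) (intro continuous_intros)
    then show "open T" by (simp add: T_def vimage_def)
    show "0 \<in> T" using S(2) by (simp add: T_def)
  qed
  have "eventually (\<lambda>t. t \<in> T) (nhds 0)" by (rule eventually_nhds_in_open[OF T])
  then have "eventually (\<lambda>t. t \<in> UNIV \<longrightarrow> f (x + t *\<^sub>R unit_vec i) = g (x + t *\<^sub>R unit_vec i)) (nhds 0)"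
    by eventually_elim (simp add: T_def eq)
  then show ?thesis unfolding partial_def by (rule vector_derivative_cong_eq) auto
qed

lemma lap_H_cong_open:
  fixes f g :: "real ^ 'n::{finite,linorder} \<Rightarrow> 'b::real_normed_vector"
  assumes S: "open S" "x \<in> S" and eq: "\<And>y. y \<in> S \<Longrightarrow> f y = g y"
  shows "lap_H f x = lap_H g x" "lap_H' f x = lap_H' g x"
proof -
  have p1: "partial i f y = partial i g y" if "y \<in> S" for i y by (rule partial_cong_open[OF S(1) that eq])
  have p2: "partial i (partial i f) x = partial i (partial i g) x" for i
    by (rule partial_cong_open[OF S p1])
  show "lap_H f x = lap_H g x" by (simp add: lap_H_def laplacian_def p2 p1[OF S(2)])
  show "lap_H' f x = lap_H' g x" by (simp add: lap_H'_def laplacian_def p2 p1[OF S(2)] eq[OF S(2)])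
qed

section \<open>The Laplacian of the upper half-space under conformal maps\<close>

lemma lap_chain_combination:
  fixes Pk :: "'n::finite \<Rightarrow> 'b::real_normed_vector" and Pkl :: "'n \<Rightarrow> 'n \<Rightarrow> 'b"
    and dF d2F :: "'n \<Rightarrow> real ^ 'n"
  assumes P1: "p1 = (\<Sum>k\<in>UNIV. (dF N $ k) *\<^sub>R Pk k)"
    and P2: "\<And>i. p2 i = (\<Sum>k\<in>UNIV. (d2F i $ k) *\<^sub>R Pk k) + (\<Sum>k\<in>UNIV. (dF i $ k) *\<^sub>R (\<Sum>l\<in>UNIV. (dF i $ l) *\<^sub>R Pkl k l))"
    and G1: "\<And>k l. (\<Sum>i\<in>UNIV. (dF i $ k) * (dF i $ l)) = (if k = l then L else 0)"
    and G2: "\<And>k. (\<Sum>i\<in>UNIV. d2F i $ k) - a * (dF N $ k) = (if k = N then B else 0)"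
  shows "(\<Sum>i\<in>UNIV. p2 i) - a *\<^sub>R p1 = L *\<^sub>R (\<Sum>k\<in>UNIV. Pkl k k) + B *\<^sub>R Pk N"
proof -
  have S1: "(\<Sum>i\<in>UNIV. \<Sum>k\<in>UNIV. (d2F i $ k) *\<^sub>R Pk k) = (\<Sum>k\<in>UNIV. (\<Sum>i\<in>UNIV. d2F i $ k) *\<^sub>R Pk k)"
    by (subst sum.swap) (simp add: scaleR_sum_left)
  have S2: "(\<Sum>i\<in>UNIV. \<Sum>k\<in>UNIV. (dF i $ k) *\<^sub>R (\<Sum>l\<in>UNIV. (dF i $ l) *\<^sub>R Pkl k l))
      = (\<Sum>k\<in>UNIV. \<Sum>l\<in>UNIV. (\<Sum>i\<in>UNIV. (dF i $ k) * (dF i $ l)) *\<^sub>R Pkl k l)"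
  proof -
    have "(\<Sum>i\<in>UNIV. \<Sum>k\<in>UNIV. (dF i $ k) *\<^sub>R (\<Sum>l\<in>UNIV. (dF i $ l) *\<^sub>R Pkl k l))
        = (\<Sum>i\<in>UNIV. \<Sum>k\<in>UNIV. \<Sum>l\<in>UNIV. ((dF i $ k) * (dF i $ l)) *\<^sub>R Pkl k l)"
      by (simp add: scaleR_sum_right)
    also have "\<dots> = (\<Sum>k\<in>UNIV. \<Sum>i\<in>UNIV. \<Sum>l\<in>UNIV. ((dF i $ k) * (dF i $ l)) *\<^sub>R Pkl k l)"
      by (rule sum.swap)
    also have "\<dots> = (\<Sum>k\<in>UNIV. \<Sum>l\<in>UNIV. \<Sum>i\<in>UNIV. ((dF i $ k) * (dF i $ l)) *\<^sub>R Pkl k l)"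
      by (intro sum.cong refl sum.swap)
    also have "\<dots> = (\<Sum>k\<in>UNIV. \<Sum>l\<in>UNIV. (\<Sum>i\<in>UNIV. (dF i $ k) * (dF i $ l)) *\<^sub>R Pkl k l)"
      by (simp add: scaleR_sum_left)
    finally show ?thesis .
  qed
  have S2': "(\<Sum>k\<in>UNIV. \<Sum>l\<in>UNIV. (\<Sum>i\<in>UNIV. (dF i $ k) * (dF i $ l)) *\<^sub>R Pkl k l) = L *\<^sub>R (\<Sum>k\<in>UNIV. Pkl k k)"
    by (simp add: G1 if_distrib[where f="\<lambda>x. x *\<^sub>R _"] scaleR_sum_right cong: if_cong)
  have S3: "(\<Sum>k\<in>UNIV. (\<Sum>i\<in>UNIV. d2F i $ k) *\<^sub>R Pk k) - a *\<^sub>R p1 = B *\<^sub>R Pk N"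
  proof -
    have "(\<Sum>k\<in>UNIV. (\<Sum>i\<in>UNIV. d2F i $ k) *\<^sub>R Pk k) - a *\<^sub>R p1
        = (\<Sum>k\<in>UNIV. ((\<Sum>i\<in>UNIV. d2F i $ k) - a * (dF N $ k)) *\<^sub>R Pk k)"
      by (simp add: P1 scaleR_sum_right scaleR_diff_left sum_subtractf)
    also have "\<dots> = B *\<^sub>R Pk N"
      by (simp add: G2 if_distrib[where f="\<lambda>x. x *\<^sub>R _"] cong: if_cong)
    finally show ?thesis .
  qed
  have "(\<Sum>i\<in>UNIV. p2 i) = (\<Sum>k\<in>UNIV. (\<Sum>i\<in>UNIV. d2F i $ k) *\<^sub>R Pk k) + L *\<^sub>R (\<Sum>k\<in>UNIV. Pkl k k)"
    by (simp add: P2 sum.distrib S1 S2 S2')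
  then show ?thesis using S3 by (simp add: algebra_simps)
qed

lemma open_upper_half: "open (upper_half :: (real ^ 'n::{finite,linorder}) set)"
proof -
  have "open {x :: real ^ 'n::{finite,linorder}. (\<lambda>x. 0) x < (\<lambda>x. x $ last_idx) x}"
    by (rule open_Collect_less) (intro continuous_intros)+
  then show ?thesis by (simp add: upper_half_def)
qed

lemma lap_H_comp_conformal:
  fixes \<phi> :: "real ^ 'n::{finite,linorder} \<Rightarrow> 'b::real_normed_vector" and F :: "real ^ 'n::{finite,linorder} \<Rightarrow> real ^ 'n::{finite,linorder}"
    and dF :: "'n::{finite,linorder} \<Rightarrow> real ^ 'n::{finite,linorder} \<Rightarrow> real ^ 'n::{finite,linorder}" and d2F :: "'n::{finite,linorder} \<Rightarrow> real ^ 'n::{finite,linorder}"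
  assumes U: "open U" and C2: "C2_on U \<phi>"
    and V: "open V" "v \<in> V" "\<And>x. x \<in> V \<Longrightarrow> F x \<in> U"
    and dF: "\<And>x i. x \<in> V \<Longrightarrow> ((\<lambda>t. F (x + t *\<^sub>R unit_vec i)) has_vector_derivative dF i x) (at 0)"
    and d2F: "\<And>i. ((\<lambda>t. dF i (v + t *\<^sub>R unit_vec i)) has_vector_derivative d2F i) (at 0)"
    and G1: "\<And>k l. (\<Sum>i\<in>UNIV. (dF i v $ k) * (dF i v $ l)) = (if k = l then lam^2 else 0)"
    and G2: "(\<Sum>i\<in>UNIV. d2F i) - ((real CARD('n) - 2) / v $ last_idx) *\<^sub>R dF last_idx v
               = (- ((real CARD('n) - 2) * lam^2 / F v $ last_idx)) *\<^sub>R unit_vec last_idx"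
    and FN: "(F v) $ last_idx = lam * v $ last_idx" and l0: "lam \<noteq> 0" and vN: "v $ last_idx \<noteq> 0"
  shows "lap_H (\<phi> \<circ> F) v = lam^2 *\<^sub>R lap_H \<phi> (F v) \<and> lap_H' (\<phi> \<circ> F) v = lam^2 *\<^sub>R lap_H' \<phi> (F v)"
proof -
  define c where "c = real CARD('n) - 2"
  define N where "N = (last_idx :: 'n)"
  note T = partial_comp[OF U C2 V dF d2F]
  have G2': "(\<Sum>i\<in>UNIV. d2F i $ k) - ((real CARD('n) - 2) / v $ last_idx) * (dF last_idx v $ k)
      = (if k = last_idx then - ((real CARD('n) - 2) * lam^2 / F v $ last_idx) else 0)" for k
    using arg_cong[OF G2, of "\<lambda>z. z $ k"] by (simp add: sum_component axis_def)
  have comb: "(\<Sum>i\<in>UNIV. partial i (partial i (\<phi> \<circ> F)) v) - (c / v $ N) *\<^sub>R partial N (\<phi> \<circ> F) v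
     = lam^2 *\<^sub>R (\<Sum>k\<in>UNIV. partial k (partial k \<phi>) (F v)) + (- (c * lam^2 / (F v) $ N)) *\<^sub>R partial N \<phi> (F v)"
    by (rule lap_chain_combination[where dF="\<lambda>i. dF i v" and d2F=d2F and N=N]) (use T G1 G2' in \<open>simp_all add: c_def N_def\<close>)
  have A: "lap_H (\<phi> \<circ> F) v = lam^2 *\<^sub>R lap_H \<phi> (F v)"
    unfolding lap_H_def laplacian_def
    using comb by (simp add: c_def N_def scaleR_diff_right)
  have B: "(c / (v $ N)^2) = lam^2 * (c / ((F v) $ N)^2)"
    using l0 vN by (simp add: FN N_def field_simps power2_eq_square)
  have "lap_H' (\<phi> \<circ> F) v = lam^2 *\<^sub>R lap_H' \<phi> (F v)"
    using A B unfolding lap_H'_def lap_H_def by (simp add: c_def N_def scaleR_add_right)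
  with A show ?thesis by simp
qed

section \<open>Similarities and inversions\<close>

lemma orthogonal_transformation_rows:
  fixes M :: "real ^ 'n::finite \<Rightarrow> real ^ 'n"
  assumes M: "orthogonal_transformation M"
  shows "(\<Sum>i\<in>UNIV. (M (unit_vec i)) $ k * (M (unit_vec i)) $ l) = (if k = l then 1 else 0)"
proof -
  define N where "N = inv M"
  have N: "orthogonal_transformation N" unfolding N_def by (rule orthogonal_transformation_inv[OF M])
  have MN: "M (N z) = z" for z
    unfolding N_def using orthogonal_transformation_surj[OF M] by (simp add: surj_f_inv_f)
  have c: "(M (unit_vec i)) $ j = (N (unit_vec j)) $ i" for i j
  proof -
    have "(M (unit_vec i)) $ j = M (unit_vec i) \<bullet> M (N (unit_vec j))" by (simp add: MN cart_eq_inner_axis)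
    also have "\<dots> = unit_vec i \<bullet> N (unit_vec j)" using M by (simp add: orthogonal_transformation_def)
    also have "\<dots> = (N (unit_vec j)) $ i" by (simp add: inner_axis')
    finally show ?thesis .
  qed
  have "(\<Sum>i\<in>UNIV. (M (unit_vec i)) $ k * (M (unit_vec i)) $ l) = N (unit_vec k) \<bullet> N (unit_vec l)"
    by (simp add: c inner_vec_def)
  also have "\<dots> = unit_vec k \<bullet> unit_vec l" using N by (simp add: orthogonal_transformation_def)
  also have "\<dots> = (if k = l then 1 else 0)" by (simp add: inner_axis_axis)
  finally show ?thesis .
qed

lemma orthogonal_transformation_reflection:
  fixes y :: "real ^ 'n::finite"
  assumes y: "y \<bullet> y \<noteq> 0"
  shows "orthogonal_transformation (\<lambda>z. z - (2 * (z \<bullet> y) / (y \<bullet> y)) *\<^sub>R y)"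
  unfolding orthogonal_transformation_def
proof (intro conjI allI)
  show "linear (\<lambda>z. z - (2 * (z \<bullet> y) / (y \<bullet> y)) *\<^sub>R y)"
    by (rule linearI) (simp_all add: inner_add_left algebra_simps add_divide_distrib)
  fix u v :: "real ^ 'n"
  show "(u - (2 * (u \<bullet> y) / (y \<bullet> y)) *\<^sub>R y) \<bullet> (v - (2 * (v \<bullet> y) / (y \<bullet> y)) *\<^sub>R y) = u \<bullet> v"
    using y by (simp add: inner_diff_left inner_diff_right inner_commute field_simps)
qed

lemma lap_H_comp_similarity:
  fixes \<phi> :: "real ^ 'n::{finite,linorder} \<Rightarrow> 'b::real_normed_vector"
    and Q :: "real ^ 'n::{finite,linorder} \<Rightarrow> real ^ 'n::{finite,linorder}"
  assumes U: "open U" and C2: "C2_on U \<phi>"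
    and mu: "\<mu> > 0" and Q: "orthogonal_transformation Q"
    and pN: "p $ last_idx = 0" and QN: "Q (unit_vec last_idx) = unit_vec last_idx"
    and v: "v \<in> upper_half"
  defines "F \<equiv> \<lambda>x. p + \<mu> *\<^sub>R Q x"
  assumes Fv: "F v \<in> U"
  shows "lap_H (\<phi> \<circ> F) v = \<mu>^2 *\<^sub>R lap_H \<phi> (F v) \<and> lap_H' (\<phi> \<circ> F) v = \<mu>^2 *\<^sub>R lap_H' \<phi> (F v)"
proof -
  interpret Q: linear Q using Q by (simp add: orthogonal_transformation_def)
  have vN: "v $ last_idx > 0" using v by (simp add: upper_half_def)
  have "continuous_on UNIV F"
    unfolding F_def by (intro continuous_intros linear_continuous_on)
      (simp add: linear_conv_bounded_linear[symmetric] Q.linear_axioms)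
  then have V: "open (F -` U)" "v \<in> F -` U" "\<And>x. x \<in> F -` U \<Longrightarrow> F x \<in> U"
    using open_vimage[OF U] Fv by auto
  have dF: "((\<lambda>t. F (x + t *\<^sub>R unit_vec i)) has_vector_derivative \<mu> *\<^sub>R Q (unit_vec i)) (at 0)" for x i
  proof -
    have "F (x + t *\<^sub>R unit_vec i) = F x + t *\<^sub>R (\<mu> *\<^sub>R Q (unit_vec i))" for t
      by (simp add: F_def Q.add Q.scale algebra_simps)
    then show ?thesis by (auto intro!: derivative_eq_intros)
  qed
  have d2F: "((\<lambda>t. (\<lambda>i x. \<mu> *\<^sub>R Q (unit_vec i)) i (v + t *\<^sub>R unit_vec i)) has_vector_derivative 0) (at 0)" for i
    by simp
  have G1: "(\<Sum>i\<in>UNIV. (\<mu> *\<^sub>R Q (unit_vec i)) $ k * (\<mu> *\<^sub>R Q (unit_vec i)) $ l) = (if k = l then \<mu>^2 else 0)"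
    for k l
  proof -
    have "(\<Sum>i\<in>UNIV. (\<mu> *\<^sub>R Q (unit_vec i)) $ k * (\<mu> *\<^sub>R Q (unit_vec i)) $ l)
        = \<mu>^2 * (\<Sum>i\<in>UNIV. Q (unit_vec i) $ k * Q (unit_vec i) $ l)"
      by (simp add: sum_distrib_left power2_eq_square algebra_simps)
    then show ?thesis by (simp add: orthogonal_transformation_rows[OF Q])
  qed
  have FN: "F v $ last_idx = \<mu> * v $ last_idx"
    using orthogonal_transformation_last_coord(1)[OF Q QN, of v] pN by (simp add: F_def inner_axis)
  have G2: "(\<Sum>i\<in>UNIV. 0) - ((real CARD('n) - 2) / v $ last_idx) *\<^sub>R (\<mu> *\<^sub>R Q (unit_vec last_idx))
      = (- ((real CARD('n) - 2) * \<mu>^2 / F v $ last_idx)) *\<^sub>R unit_vec last_idx"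
    using QN FN mu vN by (simp add: power2_eq_square)
  show ?thesis
    by (rule lap_H_comp_conformal[OF U C2 V dF d2F G1 G2]) (use FN mu vN in simp_all)
qed

lemma has_real_derivative_inverse_norm_line:
  assumes "s \<noteq> 0"
  shows "((\<lambda>t. \<mu> / (s + 2*t*a + t^2)) has_real_derivative - (2 * \<mu> * a / s^2)) (at 0)"
  using assms by (auto intro!: derivative_eq_intros simp: field_simps power2_eq_square)

lemma has_real_derivative_inverse_norm_square_line:
  assumes "s \<noteq> 0"
  shows "((\<lambda>t. 2 * \<mu> * (a + t) / (s + 2*t*a + t^2)^2) has_real_derivative 2 * \<mu> / s^2 - 8 * \<mu> * a^2 / s^3) (at 0)"
  using assms by (auto intro!: derivative_eq_intros simp: field_simps power2_eq_square power3_eq_cube)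

lemma inversion_line_has_vector_derivative:
  fixes q r :: "'a::real_normed_vector"
  assumes "s \<noteq> 0"
  shows "((\<lambda>t. (\<mu> / (s + 2*t*a + t^2)) *\<^sub>R (q + t *\<^sub>R r)) has_vector_derivative
      (\<mu> / s) *\<^sub>R r + (- (2 * \<mu> * a / s^2)) *\<^sub>R q) (at 0)"
  using assms by (auto intro!: derivative_eq_intros has_real_derivative_inverse_norm_line
      simp: algebra_simps power2_eq_square)

lemma inversion_line_has_second_vector_derivative:
  fixes q r :: "'a::real_normed_vector"
  assumes "s \<noteq> 0"
  shows "((\<lambda>t. (\<mu> / (s + 2*t*a + t^2)) *\<^sub>R r - (2 * \<mu> * (a + t) / (s + 2*t*a + t^2)^2) *\<^sub>R (q + t *\<^sub>R r))
     has_vector_derivative (- (4 * \<mu> * a / s^2)) *\<^sub>R r + (8 * \<mu> * a^2 / s^3 - 2 * \<mu> / s^2) *\<^sub>R q) (at 0)"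
proof -
  have "((\<lambda>t. q + t *\<^sub>R r) has_vector_derivative r) (at 0)" by (auto intro!: derivative_eq_intros)
  from has_vector_derivative_diff[OF
      has_vector_derivative_scaleR[OF has_real_derivative_inverse_norm_line[OF assms] has_vector_derivative_const]
      has_vector_derivative_scaleR[OF has_real_derivative_inverse_norm_square_line[OF assms] this]]
  have "((\<lambda>t. (\<mu> / (s + 2*t*a + t^2)) *\<^sub>R r - (2 * \<mu> * (a + t) / (s + 2*t*a + t^2)^2) *\<^sub>R (q + t *\<^sub>R r))
     has_vector_derivative (- (2 * \<mu> * a / s^2)) *\<^sub>R r
        - ((2 * \<mu> * a / s^2) *\<^sub>R r + (2 * \<mu> / s^2 - 8 * \<mu> * a^2 / s^3) *\<^sub>R q)) (at 0)"
    by simp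
  moreover have "\<alpha> *\<^sub>R r - (\<beta> *\<^sub>R r + \<gamma> *\<^sub>R q) = (\<alpha> - \<beta>) *\<^sub>R r + (- \<gamma>) *\<^sub>R q" for \<alpha> \<beta> \<gamma> :: real
    by (simp add: algebra_simps)
  moreover have "- (2 * \<mu> * a / s^2) - 2 * \<mu> * a / s^2 = - (4 * \<mu> * a / s^2)"
    and "- (2 * \<mu> / s^2 - 8 * \<mu> * a^2 / s^3) = 8 * \<mu> * a^2 / s^3 - 2 * \<mu> / s^2"
    by simp_all
  ultimately show ?thesis by metis
qed

lemma inner_add_unit_vec: "(y + t *\<^sub>R unit_vec i) \<bullet> (y + t *\<^sub>R unit_vec i) = y \<bullet> y + 2 * t * (y $ i) + t^2"
  by (simp add: inner_add_left inner_add_right inner_axis inner_axis' inner_commute power2_eq_square algebra_simps)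

lemma inversion_has_partial:
  fixes Q :: "real ^ 'n::finite \<Rightarrow> real ^ 'n"
  assumes Q: "linear Q" and y: "x + w \<noteq> 0"
  shows "((\<lambda>t. p + (\<mu> / ((x + t *\<^sub>R unit_vec i + w) \<bullet> (x + t *\<^sub>R unit_vec i + w))) *\<^sub>R Q (x + t *\<^sub>R unit_vec i + w))
    has_vector_derivative
      ((\<mu> / ((x + w) \<bullet> (x + w))) *\<^sub>R Q (unit_vec i) + (- (2 * \<mu> * (x + w) $ i / ((x + w) \<bullet> (x + w))^2)) *\<^sub>R Q (x + w))) (at 0)"
proof -
  interpret Q: linear Q by (rule Q)
  define y where "y = x + w"
  have s: "y \<bullet> y \<noteq> 0" using y by (simp add: y_def)
  have eq: "p + (\<mu> / ((x + t *\<^sub>R unit_vec i + w) \<bullet> (x + t *\<^sub>R unit_vec i + w))) *\<^sub>R Q (x + t *\<^sub>R unit_vec i + w)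
      = p + (\<mu> / (y \<bullet> y + 2*t*(y $ i) + t^2)) *\<^sub>R (Q y + t *\<^sub>R Q (unit_vec i))" for t
  proof -
    have e: "x + t *\<^sub>R unit_vec i + w = y + t *\<^sub>R unit_vec i" by (simp add: y_def algebra_simps)
    show ?thesis unfolding e by (simp add: inner_add_unit_vec Q.add Q.scale)
  qed
  have "((\<lambda>t. p + (\<mu> / (y \<bullet> y + 2*t*(y $ i) + t^2)) *\<^sub>R (Q y + t *\<^sub>R Q (unit_vec i))) has_vector_derivative
     0 + ((\<mu> / (y \<bullet> y)) *\<^sub>R Q (unit_vec i) + (- (2 * \<mu> * (y $ i) / (y \<bullet> y)^2)) *\<^sub>R Q y)) (at 0)"
    by (intro has_vector_derivative_add has_vector_derivative_const inversion_line_has_vector_derivative s)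
  then show ?thesis unfolding eq by (simp add: y_def)
qed

lemma inversion_has_second_partial:
  fixes Q :: "real ^ 'n::finite \<Rightarrow> real ^ 'n"
  assumes Q: "linear Q" and y: "x + w \<noteq> 0"
  shows "((\<lambda>t. (\<mu> / ((x + t *\<^sub>R unit_vec i + w) \<bullet> (x + t *\<^sub>R unit_vec i + w))) *\<^sub>R Q (unit_vec i)
              + (- (2 * \<mu> * (x + t *\<^sub>R unit_vec i + w) $ i / ((x + t *\<^sub>R unit_vec i + w) \<bullet> (x + t *\<^sub>R unit_vec i + w))^2)) *\<^sub>R Q (x + t *\<^sub>R unit_vec i + w))
    has_vector_derivative
      ((- (4 * \<mu> * (x + w) $ i / ((x + w) \<bullet> (x + w))^2)) *\<^sub>R Q (unit_vec i)
       + (8 * \<mu> * ((x + w) $ i)^2 / ((x + w) \<bullet> (x + w))^3 - 2 * \<mu> / ((x + w) \<bullet> (x + w))^2) *\<^sub>R Q (x + w))) (at 0)"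
proof -
  interpret Q: linear Q by (rule Q)
  define y where "y = x + w"
  have s: "y \<bullet> y \<noteq> 0" using y by (simp add: y_def)
  have eq: "(\<mu> / ((x + t *\<^sub>R unit_vec i + w) \<bullet> (x + t *\<^sub>R unit_vec i + w))) *\<^sub>R Q (unit_vec i)
              + (- (2 * \<mu> * (x + t *\<^sub>R unit_vec i + w) $ i / ((x + t *\<^sub>R unit_vec i + w) \<bullet> (x + t *\<^sub>R unit_vec i + w))^2)) *\<^sub>R Q (x + t *\<^sub>R unit_vec i + w)
      = (\<mu> / (y \<bullet> y + 2*t*(y $ i) + t^2)) *\<^sub>R Q (unit_vec i)
         - (2 * \<mu> * (y $ i + t) / (y \<bullet> y + 2*t*(y $ i) + t^2)^2) *\<^sub>R (Q y + t *\<^sub>R Q (unit_vec i))" for t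
  proof -
    have e: "x + t *\<^sub>R unit_vec i + w = y + t *\<^sub>R unit_vec i" by (simp add: y_def algebra_simps)
    show ?thesis unfolding e by (simp add: inner_add_unit_vec Q.add Q.scale)
  qed
  show ?thesis unfolding eq using inversion_line_has_second_vector_derivative[where \<mu>=\<mu> and a="y $ i" and r="Q (unit_vec i)" and q="Q y", OF s] by (simp add: y_def)
qed

lemma linear_sum_coordinates:
  fixes Q :: "real ^ 'n::finite \<Rightarrow> real ^ 'n"
  assumes "linear Q"
  shows "(\<Sum>i\<in>UNIV. (f * y $ i) *\<^sub>R Q (unit_vec i)) = f *\<^sub>R Q y"
proof -
  interpret Q: linear Q by fact
  have "(\<Sum>i\<in>UNIV. (f * y $ i) *\<^sub>R Q (unit_vec i)) = f *\<^sub>R Q (\<Sum>i\<in>UNIV. (y $ i) *\<^sub>R unit_vec i)"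
    by (simp add: Q.sum Q.scale scaleR_sum_right)
  then show ?thesis by (simp add: unit_vec_expansion)
qed

lemma inversion_jacobian_orthogonal:
  fixes Q :: "real ^ 'n::finite \<Rightarrow> real ^ 'n"
  assumes Q: "orthogonal_transformation Q" and y: "y \<noteq> 0"
  defines "s \<equiv> y \<bullet> y"
  shows "(\<Sum>i\<in>UNIV. ((\<mu> / s) *\<^sub>R Q (unit_vec i) + (- (2 * \<mu> * y $ i / s^2)) *\<^sub>R Q y) $ k
                   * ((\<mu> / s) *\<^sub>R Q (unit_vec i) + (- (2 * \<mu> * y $ i / s^2)) *\<^sub>R Q y) $ l)
         = (if k = l then (\<mu> / s)^2 else 0)"
proof -
  interpret Q: linear Q using Q by (simp add: orthogonal_transformation_def)
  have s0: "s \<noteq> 0" using y by (simp add: s_def)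
  define M where "M = Q \<circ> (\<lambda>z. z - (2 * (z \<bullet> y) / (y \<bullet> y)) *\<^sub>R y)"
  have M: "orthogonal_transformation M"
    unfolding M_def by (rule orthogonal_transformation_compose[OF Q orthogonal_transformation_reflection]) (use y in simp)
  have e: "(\<mu> / s) *\<^sub>R Q (unit_vec i) + (- (2 * \<mu> * y $ i / s^2)) *\<^sub>R Q y = (\<mu> / s) *\<^sub>R M (unit_vec i)" for i
  proof -
    have Mi: "M (unit_vec i) = Q (unit_vec i) - (2 * y $ i / s) *\<^sub>R Q y"
      by (simp add: M_def Q.diff Q.scale inner_axis' s_def)
    show ?thesis unfolding Mi using s0 by (simp add: scaleR_diff_right power2_eq_square)
  qed
  have "(\<Sum>i\<in>UNIV. ((\<mu> / s) *\<^sub>R M (unit_vec i)) $ k * ((\<mu> / s) *\<^sub>R M (unit_vec i)) $ l)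
      = (\<mu> / s)^2 * (\<Sum>i\<in>UNIV. (M (unit_vec i)) $ k * (M (unit_vec i)) $ l)"
    by (simp add: sum_distrib_left power2_eq_square algebra_simps)
  also have "\<dots> = (if k = l then (\<mu> / s)^2 else 0)" by (simp add: orthogonal_transformation_rows[OF M])
  finally show ?thesis by (simp only: e)
qed

lemma inversion_laplacian_defect:
  fixes Q :: "real ^ 'n::finite \<Rightarrow> real ^ 'n"
  assumes Q: "linear Q" and y: "y \<noteq> 0" and QN: "Q (unit_vec N) = unit_vec N" and yN: "y $ N \<noteq> 0"
  defines "s \<equiv> y \<bullet> y" and "c \<equiv> real CARD('n) - 2"
  shows "(\<Sum>i\<in>UNIV. (- (4 * \<mu> * y $ i / s^2)) *\<^sub>R Q (unit_vec i) + (8 * \<mu> * (y $ i)^2 / s^3 - 2 * \<mu> / s^2) *\<^sub>R Q y)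
          - (c / y $ N) *\<^sub>R ((\<mu> / s) *\<^sub>R Q (unit_vec N) + (- (2 * \<mu> * y $ N / s^2)) *\<^sub>R Q y)
         = (- (c * \<mu> / (s * y $ N))) *\<^sub>R unit_vec N"
proof -
  have s0: "s \<noteq> 0" using y by (simp add: s_def)
  have ss: "(\<Sum>i\<in>UNIV. y $ i * y $ i) = s" by (simp add: s_def inner_vec_def)
  have A: "(\<Sum>i\<in>UNIV. (- (4 * \<mu> * y $ i / s^2)) *\<^sub>R Q (unit_vec i)) = (- (4 * \<mu> / s^2)) *\<^sub>R Q y"
    using linear_sum_coordinates[OF Q, of "- (4 * \<mu> / s^2)" y] by (simp add: algebra_simps)
  have B: "(\<Sum>i\<in>UNIV. (8 * \<mu> * (y $ i)^2 / s^3 - 2 * \<mu> / s^2) *\<^sub>R Q y)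
       = (8 * \<mu> / s^2 - 2 * real CARD('n) * \<mu> / s^2) *\<^sub>R Q y"
  proof -
    have "(\<Sum>i\<in>UNIV. (8 * \<mu> * (y $ i)^2 / s^3 - 2 * \<mu> / s^2)) = 8 * \<mu> / s^3 * (\<Sum>i\<in>UNIV. (y $ i)^2) - real CARD('n) * (2 * \<mu> / s^2)"
      by (simp add: sum_subtractf sum_distrib_left)
    also have "\<dots> = 8 * \<mu> / s^2 - 2 * real CARD('n) * \<mu> / s^2"
      using s0 by (simp add: ss power2_eq_square power3_eq_cube field_simps)
    finally show ?thesis by (simp add: scaleR_sum_left[symmetric])
  qed
  have "(\<Sum>i\<in>UNIV. (- (4 * \<mu> * y $ i / s^2)) *\<^sub>R Q (unit_vec i) + (8 * \<mu> * (y $ i)^2 / s^3 - 2 * \<mu> / s^2) *\<^sub>R Q y)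
       = (- (4 * \<mu> / s^2) + (8 * \<mu> / s^2 - 2 * real CARD('n) * \<mu> / s^2)) *\<^sub>R Q y"
    unfolding sum.distrib A B by (simp only: scaleR_add_left)
  also have "(- (4 * \<mu> / s^2) + (8 * \<mu> / s^2 - 2 * real CARD('n) * \<mu> / s^2)) = - (2 * c * \<mu> / s^2)"
    using s0 by (simp add: c_def field_simps)
  finally have S: "(\<Sum>i\<in>UNIV. (- (4 * \<mu> * y $ i / s^2)) *\<^sub>R Q (unit_vec i) + (8 * \<mu> * (y $ i)^2 / s^3 - 2 * \<mu> / s^2) *\<^sub>R Q y)
       = (- (2 * c * \<mu> / s^2)) *\<^sub>R Q y" .
  have "(- (2 * c * \<mu> / s^2)) *\<^sub>R Q y - (c / y $ N) *\<^sub>R ((\<mu> / s) *\<^sub>R unit_vec N + (- (2 * \<mu> * y $ N / s^2)) *\<^sub>R Q y)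
       = (- (2 * c * \<mu> / s^2) + (c / y $ N) * (2 * \<mu> * y $ N / s^2)) *\<^sub>R Q y - ((c / y $ N) * (\<mu> / s)) *\<^sub>R unit_vec N"
    by (simp add: algebra_simps)
  also have "(- (2 * c * \<mu> / s^2) + (c / y $ N) * (2 * \<mu> * y $ N / s^2)) = 0"
    using yN by (simp add: field_simps)
  also have "(c / y $ N) * (\<mu> / s) = c * \<mu> / (s * y $ N)" by simp
  finally show ?thesis unfolding S QN by simp
qed

lemma lap_H_comp_inversion:
  fixes \<phi> :: "real ^ 'n::{finite,linorder} \<Rightarrow> 'b::real_normed_vector"
    and Q :: "real ^ 'n::{finite,linorder} \<Rightarrow> real ^ 'n::{finite,linorder}"
  assumes U: "open U" and C2: "C2_on U \<phi>"
    and mu: "\<mu> > 0" and Q: "orthogonal_transformation Q"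
    and pN: "p $ last_idx = 0" and QN: "Q (unit_vec last_idx) = unit_vec last_idx"
    and wN: "w $ last_idx = 0" and v: "v \<in> upper_half"
  defines "F \<equiv> \<lambda>x. p + (\<mu> / ((x + w) \<bullet> (x + w))) *\<^sub>R Q (x + w)"
    and "s \<equiv> (v + w) \<bullet> (v + w)"
  assumes Fv: "F v \<in> U"
  shows "lap_H (\<phi> \<circ> F) v = (\<mu> / s)^2 *\<^sub>R lap_H \<phi> (F v) \<and> lap_H' (\<phi> \<circ> F) v = (\<mu> / s)^2 *\<^sub>R lap_H' \<phi> (F v)"
proof -
  define N where "N = (last_idx :: 'n)"
  interpret Q: linear Q using Q by (simp add: orthogonal_transformation_def)
  have vN: "v $ N > 0" using v by (simp add: upper_half_def N_def)
  have nz: "x + w \<noteq> 0" if "x \<in> upper_half" for x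
  proof -
    have "(x + w) $ N > 0" using that wN by (simp add: upper_half_def N_def)
    then show ?thesis by (metis less_irrefl zero_index)
  qed
  have QN': "Q x $ N = x $ N" for x
    using orthogonal_transformation_last_coord(1)[OF Q QN, of x] by (simp add: inner_axis N_def)
  have cQ: "continuous_on UNIV Q"
    by (rule linear_continuous_on) (simp add: linear_conv_bounded_linear[symmetric] Q.linear_axioms)
  have c1: "continuous_on upper_half (\<lambda>x. Q (x + w))"
    by (rule continuous_on_compose2[OF cQ]) (auto intro!: continuous_intros)
  have c2: "continuous_on upper_half (\<lambda>x. \<mu> / ((x + w) \<bullet> (x + w)))"
    by (intro continuous_intros) (use nz in auto)
  have "continuous_on upper_half F"
    unfolding F_def by (intro continuous_on_add continuous_on_const continuous_on_scaleR c1 c2)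
  then have V: "open (upper_half \<inter> F -` U)" "v \<in> upper_half \<inter> F -` U"
      "\<And>x. x \<in> upper_half \<inter> F -` U \<Longrightarrow> F x \<in> U"
    using continuous_open_preimage[OF _ open_upper_half U] v Fv by auto
  define dF where "dF i x = (\<mu> / ((x + w) \<bullet> (x + w))) *\<^sub>R Q (unit_vec i)
      + (- (2 * \<mu> * (x + w) $ i / ((x + w) \<bullet> (x + w))^2)) *\<^sub>R Q (x + w)" for i x
  define y where "y = v + w"
  have y0: "y \<noteq> 0" using nz[OF v] by (simp add: y_def)
  have s0: "s > 0" using y0 by (simp add: s_def y_def[symmetric])
  have yN: "y $ N = v $ N" using wN by (simp add: y_def N_def)
  define d2F where "d2F i = (- (4 * \<mu> * y $ i / s^2)) *\<^sub>R Q (unit_vec i)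
      + (8 * \<mu> * (y $ i)^2 / s^3 - 2 * \<mu> / s^2) *\<^sub>R Q y" for i
  have dFd: "((\<lambda>t. F (x + t *\<^sub>R unit_vec i)) has_vector_derivative dF i x) (at 0)"
    if "x \<in> upper_half \<inter> F -` U" for x i
    using inversion_has_partial[OF Q.linear_axioms nz, of x p \<mu> i] that by (simp add: F_def dF_def)
  have d2Fd: "((\<lambda>t. dF i (v + t *\<^sub>R unit_vec i)) has_vector_derivative d2F i) (at 0)" for i
    using inversion_has_second_partial[OF Q.linear_axioms nz[OF v], of \<mu> i]
    by (simp add: dF_def d2F_def y_def s_def)
  have G1: "(\<Sum>i\<in>UNIV. dF i v $ k * dF i v $ l) = (if k = l then (\<mu> / s)^2 else 0)" for k l
    using inversion_jacobian_orthogonal[OF Q y0, of \<mu> k l] by (simp add: dF_def y_def s_def)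
  have FN: "F v $ N = (\<mu> / s) * v $ N" using pN QN' yN by (simp add: F_def y_def s_def N_def)
  have G2: "(\<Sum>i\<in>UNIV. d2F i) - ((real CARD('n) - 2) / v $ last_idx) *\<^sub>R dF last_idx v
      = (- ((real CARD('n) - 2) * (\<mu> / s)^2 / F v $ last_idx)) *\<^sub>R unit_vec last_idx"
  proof -
    have "(real CARD('n) - 2) * (\<mu> / s)^2 / F v $ N = (real CARD('n) - 2) * \<mu> / (s * y $ N)"
      using FN yN s0 mu vN by (simp add: power2_eq_square field_simps)
    then show ?thesis
      using inversion_laplacian_defect[OF Q.linear_axioms y0 QN[folded N_def], of \<mu>] vN yN
      by (simp add: d2F_def dF_def y_def s_def N_def)
  qed
  show ?thesis
    by (rule lap_H_comp_conformal[OF U C2 V dFd d2Fd G1 G2]) (use FN mu s0 vN in \<open>simp_all add: N_def\<close>)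
qed

theorem mainTheorem7:
  fixes a b c d :: "'n::{finite,linorder} cl"
    and U :: "(real ^ 'n::{finite,linorder}) set"
    and \<phi> :: "real ^ 'n::{finite,linorder} \<Rightarrow> 'n::{finite,linorder} cl"
  assumes n_gt: "CARD('n::{finite,linorder}) > 2"
    and vahlen: "normalized_vahlen a b c d"
    and onto: "maps_upper_half_onto a b c d"
    and U_sub: "U \<subseteq> upper_half"
    and U_open: "open U" and U_conn: "connected U" and U_ne: "U \<noteq> {}"
    and phi_val: "\<forall>x\<in>U. in_Cl_lower (\<phi> x)"
    and phi_C2: "C2_on U \<phi>"
  defines "\<psi> \<equiv> (\<lambda>x. cl_to_vec (moebius a b c d x))"
  shows "\<forall>v\<in>upper_half. \<psi> v \<in> U \<longrightarrow>
      lap_H (\<phi> \<circ> \<psi>) v = (1 / norm (c \<otimes>\<^sub>c cl_vec v + d) ^ 4) *\<^sub>R lap_H \<phi> (\<psi> v) \<and>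
      lap_H' (\<phi> \<circ> \<psi>) v = (1 / norm (c \<otimes>\<^sub>c cl_vec v + d) ^ 4) *\<^sub>R lap_H' \<phi> (\<psi> v)"
proof (intro ballI impI)
  \<comment> \<open>Only \<open>U_open\<close> and \<open>phi_C2\<close> are needed: the identities hold for any \<open>C\<^sup>2\<close> map on an open set,
    whatever its values and whether or not \<open>n > 2\<close>.\<close>
  fix v assume v: "v \<in> upper_half" and vU: "\<psi> v \<in> U"
  have norm4: "norm (c \<otimes>\<^sub>c cl_vec v + d) ^ 4 = ((norm (c \<otimes>\<^sub>c cl_vec v + d))^2)^2" by simp
  show "lap_H (\<phi> \<circ> \<psi>) v = (1 / norm (c \<otimes>\<^sub>c cl_vec v + d) ^ 4) *\<^sub>R lap_H \<phi> (\<psi> v) \<and>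
    lap_H' (\<phi> \<circ> \<psi>) v = (1 / norm (c \<otimes>\<^sub>c cl_vec v + d) ^ 4) *\<^sub>R lap_H' \<phi> (\<psi> v)"
  proof (cases rule: moebius_upper_half_normal_form[OF vahlen onto, case_names similarity inversion])
    case (similarity p \<mu> Q)
    then have "\<psi> = (\<lambda>x. p + \<mu> *\<^sub>R Q x)" by (simp add: \<psi>_def fun_eq_iff)
    with lap_H_comp_similarity[OF U_open phi_C2 similarity(1-4) v] vU similarity(6) norm4
    show ?thesis by (simp add: power_one_over)
  next
    case (inversion p \<mu> Q w)
    define F where "F = (\<lambda>x. p + (\<mu> / ((x + w) \<bullet> (x + w))) *\<^sub>R Q (x + w))"
    have "\<psi> x = F x" if "x \<in> upper_half" for x using inversion(6)[OF that] by (simp add: \<psi>_def F_def)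
    with lap_H_cong_open[OF open_upper_half v, of "\<phi> \<circ> \<psi>" "\<phi> \<circ> F"]
      lap_H_comp_inversion[OF U_open phi_C2 inversion(1-5) v] v vU inversion(1) inversion(7) norm4
    show ?thesis unfolding F_def by (simp add: power_divide)
  qed
qed

end
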